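(* Let $k\ge3$ and $\frac1k<r_0<\frac1{k-1}$. Every $k$-hop path $0=v_0,v_1,\dots,v_k=1$ in $G$ satisfies $v_j\in L_j$ for $j=1,\dots,k-1$. For a point $x\in\mathcal P_\lambda\cap L_j$, define its offset $y(x)=x-(1-(k-j)r_0)$. Let $W$ be the random word obtained by listing the points of $\mathcal P_\lambda\cap(L_1\cup\dots\cup L_{k-1})$ in decreasing order of offset, and writing the letter $e_j$ for each point of $L_j$. Then, conditionally on $(m_1,\dots,m_{k-1})$, $W$ is almost surely well defined and uniformly distributed on $\mathcal P(\mathcal M_{k-1})$. Moreover, almost surely $\sigma_k$ equals the number of $(k-1)$-tuples of positions $p_1<p_2<\dots<p_{k-1}$ in $W$ such that the letter at $p_j$ is $e_j$ for all $j$. Equivalently, $\sigma_k=\sum_{s=1}^{m_{k-1}}S_{\pi_{k-2,k-1}(W)(s)}(W')$, where $W'$ is the word obtained from $W$ by deleting all letters $e_{k-1}$.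
   Context: Fix $\lambda>0$. Let $\mathcal P_\lambda$ be a homogeneous Poisson point process of intensity $\lambda$ on $[0,1]$. Set $V=\mathcal P_\lambda\cup\{0,1\}$ and let $G$ be the graph on $V$ in which distinct $x,y$ are adjacent iff $|x-y|<r_0$. A $k$-hop path from $0$ to $1$ is a sequence of vertices $0=v_0,\dots,v_k=1$ of $G$ with consecutive vertices adjacent. $\sigma_k$ is the number of such paths. For $j=1,\dots,k-1$, the lens is $L_j=(1-(k-j)r_0,\; j r_0)$, and $m_j=\#(\mathcal P_\lambda\cap L_j)$. $\mathcal P(\mathcal M_d)$ is the set of words of length $m_1+\dots+m_d$ in letters $e_1,\dots,e_d$ with exactly $m_i$ copies of $e_i$. For a word $w$ and $i\ne j$, $\pi_{i,j}(w)(s)$ is the number of occurrences of $e_i$ preceding the $s$-th occurrence of $e_j$. For $w\in\mathcal P(\mathcal M_d)$ and $0\le t\le m_d$, $S_t(w)$ is the number of position tuples $p_1<\dots<p_d$ in $w$ with letter $e_i$ at $p_i$ for each $i$, and $p_d$ at or before the $t$-th occurrence of $e_d$. *)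

theory Defs
  imports "HOL-Probability.Probability"
begin

text \<open>Sample space: a Poisson(lam) number N of points, together with an
  independent i.i.d. sequence of uniform points on [0,1]; the Poisson process
  is the set of the first N points.\<close>

definition PPP :: "real \<Rightarrow> (nat \<times> (nat \<Rightarrow> real)) measure" where
  "PPP lam = measure_pmf (poisson_pmf lam) \<Otimes>\<^sub>M
             (\<Pi>\<^sub>M i\<in>(UNIV::nat set). uniform_measure lborel {0..1::real})"

definition pts :: "nat \<times> (nat \<Rightarrow> real) \<Rightarrow> real set" where
  "pts \<omega> = snd \<omega> ` {..<fst \<omega>}"

definition verts :: "nat \<times> (nat \<Rightarrow> real) \<Rightarrow> real set" where
  "verts \<omega> = pts \<omega> \<union> {0, 1}"

definition adj :: "real \<Rightarrow> real \<Rightarrow> real \<Rightarrow> bool" where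
  "adj r0 x y \<longleftrightarrow> x \<noteq> y \<and> \<bar>x - y\<bar> < r0"

definition khop_paths :: "real \<Rightarrow> nat \<Rightarrow> nat \<times> (nat \<Rightarrow> real) \<Rightarrow> real list set" where
  "khop_paths r0 k \<omega> = {vs. length vs = Suc k \<and> vs ! 0 = 0 \<and> vs ! k = 1 \<and>
      set vs \<subseteq> verts \<omega> \<and> (\<forall>i<k. adj r0 (vs ! i) (vs ! Suc i))}"

definition sigma :: "real \<Rightarrow> nat \<Rightarrow> nat \<times> (nat \<Rightarrow> real) \<Rightarrow> nat" where
  "sigma r0 k \<omega> = card (khop_paths r0 k \<omega>)"

definition lens :: "real \<Rightarrow> nat \<Rightarrow> nat \<Rightarrow> real set" where
  "lens r0 k j = {1 - real (k - j) * r0 <..< real j * r0}"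

definition mcount :: "real \<Rightarrow> nat \<Rightarrow> nat \<Rightarrow> nat \<times> (nat \<Rightarrow> real) \<Rightarrow> nat" where
  "mcount r0 k j \<omega> = card (pts \<omega> \<inter> lens r0 k j)"

text \<open>Letters e_j are encoded as the natural numbers j.\<close>

definition lensidx :: "real \<Rightarrow> nat \<Rightarrow> real \<Rightarrow> nat" where
  "lensidx r0 k x = (THE j. j \<in> {1..k-1} \<and> x \<in> lens r0 k j)"

definition offset :: "real \<Rightarrow> nat \<Rightarrow> real \<Rightarrow> real" where
  "offset r0 k x = x - (1 - real (k - lensidx r0 k x) * r0)"

definition lens_pts :: "real \<Rightarrow> nat \<Rightarrow> nat \<times> (nat \<Rightarrow> real) \<Rightarrow> real set" where
  "lens_pts r0 k \<omega> = pts \<omega> \<inter> (\<Union>j\<in>{1..k-1}. lens r0 k j)"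

definition W_welldef :: "real \<Rightarrow> nat \<Rightarrow> nat \<times> (nat \<Rightarrow> real) \<Rightarrow> bool" where
  "W_welldef r0 k \<omega> \<longleftrightarrow> inj_on (offset r0 k) (lens_pts r0 k \<omega>)"

definition Wword :: "real \<Rightarrow> nat \<Rightarrow> nat \<times> (nat \<Rightarrow> real) \<Rightarrow> nat list" where
  "Wword r0 k \<omega> = map (lensidx r0 k)
     (sort_key (\<lambda>x. - offset r0 k x) (sorted_list_of_set (lens_pts r0 k \<omega>)))"

text \<open>P(M_d): words in letters 1..d with exactly M i copies of letter i.\<close>
definition words :: "(nat \<Rightarrow> nat) \<Rightarrow> nat \<Rightarrow> nat list set" where
  "words M d = {w. set w \<subseteq> {1..d} \<and> (\<forall>i\<in>{1..d}. count_list w i = M i)}"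

text \<open>Position (0-based) of the s-th occurrence (s \<ge> 1) of letter a in w.\<close>
definition occ_pos :: "nat list \<Rightarrow> nat \<Rightarrow> nat \<Rightarrow> nat" where
  "occ_pos w a s = filter (\<lambda>i. w ! i = a) [0..<length w] ! (s - 1)"

definition pi_ij :: "nat \<Rightarrow> nat \<Rightarrow> nat list \<Rightarrow> nat \<Rightarrow> nat" where
  "pi_ij i j w s = count_list (take (occ_pos w j s) w) i"

text \<open>Position tuples p_1 < ... < p_d with letter e_i at p_i (stored 0-based
  as a list p with p!(i-1) = p_i).\<close>
definition emb_tuples :: "nat list \<Rightarrow> nat \<Rightarrow> nat list set" where
  "emb_tuples w d = {p. length p = d \<and> sorted_wrt (<) p \<and>
      (\<forall>i<d. p ! i < length w \<and> w ! (p ! i) = Suc i)}"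

definition S_t :: "nat \<Rightarrow> nat \<Rightarrow> nat list \<Rightarrow> nat" where
  "S_t d t w = card {p \<in> emb_tuples w d. 1 \<le> t \<and> t \<le> count_list w d \<and>
                                          p ! (d - 1) \<le> occ_pos w d t}"

end

(*
  Each hop is shorter than r0, so the j-th vertex of a k-hop path lies below j r0 and above
  1 - (k - j) r0, i.e. in the lens L_j. Since (k - 1) r0 < 1 the lenses are disjoint intervals
  of length k r0 - 1 < r0, and L_(j+1) is L_j translated by r0; hence a point of L_j and a point
  of L_(j+1) are adjacent exactly when the offset decreases. So k-hop paths are the choices of
  one point per lens with decreasing offsets, i.e. the embeddings of e_1 e_2 ... e_(k-1) into W;
  sorting them by the occurrence of e_(k-1) they use gives the sum over S_t.

  Given the number n of Poisson points, the points are i.i.d. uniform and almost surely have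
  pairwise distinct offsets. The event W = w then splits into regions indexed by the points that
  produce the letters of w. Translating the point producing the t-th letter from lens w_t to lens
  w'_t, keeping its offset, is a coordinatewise measure-preserving bijection between the regions
  for w and w'; so all words with the same letter counts are equally likely.
*)

theory Submission
  imports Defs
begin

section \<open>The lenses\<close>

locale k_hop_regime =
  fixes r0 :: real and k :: nat
  assumes k_ge_3: "k \<ge> 3" and r0_gt: "1 / real k < r0" and r0_lt: "r0 < 1 / real (k - 1)"
begin

definition lens_left :: "nat \<Rightarrow> real" where "lens_left j = 1 - real (k - j) * r0"
definition lens_width :: real where "lens_width = real k * r0 - 1"

lemma r0_pos: "r0 > 0"
  using r0_gt k_ge_3 by (smt (verit) divide_pos_pos of_nat_0_less_iff numeral_less_iff zero_less_numeral less_le_trans)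

lemma k_minus_1_r0_less_one: "real (k - 1) * r0 < 1"
  using r0_lt k_ge_3 by (simp add: field_simps)

lemma lens_width_less_r0: "lens_width < r0"
  using k_minus_1_r0_less_one k_ge_3 by (simp add: lens_width_def of_nat_diff algebra_simps)

lemma lens_left_diff: "j \<le> k \<Longrightarrow> j' \<le> k \<Longrightarrow> lens_left j - lens_left j' = (real j - real j') * r0"
  by (simp add: lens_left_def of_nat_diff algebra_simps)

lemma lens_eq_left_right: "lens r0 k j = {lens_left j <..< real j * r0}"
  by (simp add: lens_def lens_left_def)

lemma lens_eq_interval:
  assumes "j \<in> {1..k-1}"
  shows "lens r0 k j = {lens_left j <..< lens_left j + lens_width}"
proof -
  have "j \<le> k" using assms by auto
  then show ?thesis by (simp add: lens_def lens_left_def lens_width_def of_nat_diff algebra_simps)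
qed

lemma lens_left_pos: "1 \<le> j \<Longrightarrow> j \<le> k \<Longrightarrow> lens_left j > 0"
proof -
  assume "1 \<le> j" "j \<le> k"
  then have "real (k - j) * r0 \<le> real (k - 1) * r0" using r0_pos by (simp add: mult_right_mono)
  then show ?thesis using k_minus_1_r0_less_one by (simp add: lens_left_def)
qed

lemma lens_right_less_one: "j \<le> k - 1 \<Longrightarrow> real j * r0 < 1"
proof -
  assume "j \<le> k - 1"
  then have "real j * r0 \<le> real (k - 1) * r0" using r0_pos by (simp add: mult_right_mono)
  then show ?thesis using k_minus_1_r0_less_one by simp
qed

lemma lens_subset_unit:
  assumes j: "j \<in> {1..k-1}" and x: "x \<in> lens r0 k j"
  shows "0 < x \<and> x < 1"
proof -
  have "lens_left j < x" "x < real j * r0" using x by (auto simp: lens_def lens_left_def)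
  moreover have "1 \<le> j" "j \<le> k" "j \<le> k - 1" using j by auto
  ultimately show ?thesis using lens_left_pos[of j] lens_right_less_one[of j] by auto
qed

text \<open>Consecutive lenses are separated by a gap of width \<open>r0 - lens_width\<close>.\<close>

lemma lens_disjoint:
  assumes "j \<in> {1..k-1}" "j' \<in> {1..k-1}" "x \<in> lens r0 k j" "x \<in> lens r0 k j'"
  shows "j = j'"
proof -
  have "x \<notin> lens r0 k j'" if "j < j'" "j' \<le> k - 1" "x \<in> lens r0 k j" for j j'
  proof
    assume "x \<in> lens r0 k j'"
    moreover have "real (k - j') * r0 \<le> (real k - real j - 1) * r0"
      using that k_ge_3 r0_pos by (intro mult_right_mono) (auto simp: of_nat_diff)
    ultimately have "1 < (real k - 1) * r0" using that(3) by (auto simp: lens_def algebra_simps)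
    with k_minus_1_r0_less_one k_ge_3 show False by (simp add: of_nat_diff)
  qed
  with assms show ?thesis by (cases j j' rule: linorder_cases) auto
qed

lemma lensidx_eq:
  assumes "j \<in> {1..k-1}" "x \<in> lens r0 k j"
  shows "lensidx r0 k x = j"
  unfolding lensidx_def using assms lens_disjoint by (intro the_equality) blast+

lemma offset_eq: "j \<in> {1..k-1} \<Longrightarrow> x \<in> lens r0 k j \<Longrightarrow> offset r0 k x = x - lens_left j"
  by (simp add: offset_def lensidx_eq lens_left_def)

lemma offset_bounds:
  "j \<in> {1..k-1} \<Longrightarrow> x \<in> lens r0 k j \<Longrightarrow> 0 < offset r0 k x \<and> offset r0 k x < lens_width"
  using lens_eq_interval[of j] by (auto simp: offset_eq)

lemma lens_ptsD: "x \<in> lens_pts r0 k \<omega> \<Longrightarrow> x \<in> lens r0 k (lensidx r0 k x) \<and> lensidx r0 k x \<in> {1..k-1}"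
  by (auto simp: lens_pts_def lensidx_eq)

text \<open>Each hop advances by less than \<open>r0\<close>, so after \<open>j\<close> hops from 0 we are below \<open>j r0\<close>,
  and \<open>k - j\<close> hops before 1 we are above \<open>1 - (k - j) r0\<close>.\<close>

lemma khop_path_in_lens:
  assumes vs: "vs \<in> khop_paths r0 k \<omega>" and j: "j \<in> {1..k-1}"
  shows "vs ! j \<in> lens r0 k j"
proof -
  from vs have v0: "vs ! 0 = 0" and vk: "vs ! k = 1"
    and hop: "\<And>i. i < k \<Longrightarrow> \<bar>vs ! i - vs ! Suc i\<bar> < r0"
    by (auto simp: khop_paths_def adj_def)
  have upper: "vs ! i < real i * r0" if "1 \<le> i" "i \<le> k" for i
    using that
  proof (induction i rule: dec_induct)
    case base then show ?case using hop[of 0] v0 by simp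
  next
    case (step i)
    then show ?case using hop[of i] by (simp add: algebra_simps)
  qed
  have lower: "vs ! (k - m) > 1 - real m * r0" if "1 \<le> m" "m \<le> k" for m
    using that
  proof (induction m rule: dec_induct)
    case base then show ?case using hop[of "k - 1"] vk k_ge_3 by simp
  next
    case (step m)
    then have "Suc (k - Suc m) = k - m" by simp
    then show ?case using step hop[of "k - Suc m"] by (simp add: algebra_simps)
  qed
  have "1 \<le> j" "j \<le> k" "1 \<le> k - j" "k - (k - j) = j" using j by auto
  then show ?thesis
    using upper[of j] lower[of "k - j"] by (simp add: lens_def)
qed

end

section \<open>Embeddings of the pattern \<open>1 2 \<dots> d\<close> into a word\<close>

lemma emb_tuples_0: "emb_tuples u 0 = {[]}"
  by (auto simp: emb_tuples_def)

lemma finite_emb_tuples: "finite (emb_tuples u d)"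
proof -
  have "emb_tuples u d \<subseteq> {xs. set xs \<subseteq> {..<length u} \<and> length xs = d}"
    by (auto simp: emb_tuples_def in_set_conv_nth)
  then show ?thesis by (rule finite_subset) (rule finite_lists_length_eq, simp)
qed

lemma emb_tuples_nth_le_last:
  assumes "p \<in> emb_tuples u d" "i < d"
  shows "p ! i \<le> p ! (d - 1)"
proof -
  have "sorted_wrt (<) p" "length p = d" using assms by (auto simp: emb_tuples_def)
  then show ?thesis using assms(2)
    by (metis diff_Suc_1 le_eq_less_or_eq less_Suc_eq_le not_less_eq sorted_wrt_nth_less Suc_pred' gr_implies_not_zero)
qed

lemma emb_tuples_snoc_last:
  assumes p: "p \<in> emb_tuples (u @ [d]) d" and last: "p ! (d - 1) = length u" and d: "d \<ge> 1"
  shows "\<exists>q\<in>emb_tuples u (d - 1). p = q @ [length u]"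
proof -
  have lp: "length p = d" and sp: "sorted_wrt (<) p"
    and pi: "\<And>i. i < d \<Longrightarrow> (u @ [d]) ! (p ! i) = Suc i"
    using p by (auto simp: emb_tuples_def)
  define q where "q = butlast p"
  have pq: "p = q @ [length u]"
    using append_butlast_last_id[of p] last_conv_nth[of p] lp last d unfolding q_def by fastforce
  have lq: "length q = d - 1" using lp by (simp add: q_def)
  have sq: "sorted_wrt (<) q" and below: "\<forall>y\<in>set q. y < length u"
    using sp unfolding pq by (simp_all add: sorted_wrt_append)
  have "q ! i < length u \<and> u ! (q ! i) = Suc i" if i: "i < d - 1" for i
    using below pi[of i] i lq unfolding pq by (simp add: nth_append)
  then have "q \<in> emb_tuples u (d - 1)" using lq sq by (simp add: emb_tuples_def)
  with pq show ?thesis by blast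
qed

lemma emb_tuples_snoc:
  assumes d: "d \<ge> 1"
  shows "emb_tuples (u @ [x]) d =
    emb_tuples u d \<union> (if x = d then (\<lambda>q. q @ [length u]) ` emb_tuples u (d - 1) else {})"
proof (intro equalityI subsetI)
  fix p assume p: "p \<in> emb_tuples (u @ [x]) d"
  then have pi: "\<And>i. i < d \<Longrightarrow> p ! i < Suc (length u) \<and> (u @ [x]) ! (p ! i) = Suc i"
    by (auto simp: emb_tuples_def)
  show "p \<in> emb_tuples u d \<union> (if x = d then (\<lambda>q. q @ [length u]) ` emb_tuples u (d - 1) else {})"
  proof (cases "p ! (d - 1) < length u")
    case True
    then have "p ! i < length u" if "i < d" for i
      using emb_tuples_nth_le_last[OF p that] by simp
    then have "p \<in> emb_tuples u d" using p by (auto simp: emb_tuples_def nth_append)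
    then show ?thesis by blast
  next
    case False
    then have last: "p ! (d - 1) = length u" using pi[of "d - 1"] d by auto
    then have xd: "x = d" using pi[of "d - 1"] d by (simp add: nth_append)
    with p d xd obtain q where "q \<in> emb_tuples u (d - 1)" "p = q @ [length u]"
      using emb_tuples_snoc_last[of p u d] last by auto
    then show ?thesis using xd by auto
  qed
next
  fix p assume p: "p \<in> emb_tuples u d \<union> (if x = d then (\<lambda>q. q @ [length u]) ` emb_tuples u (d - 1) else {})"
  show "p \<in> emb_tuples (u @ [x]) d"
  proof (cases "p \<in> emb_tuples u d")
    case True then show ?thesis by (auto simp: emb_tuples_def nth_append)
  next
    case False
    with p obtain q where xd: "x = d" and q: "q \<in> emb_tuples u (d - 1)" and pq: "p = q @ [length u]"
      by (auto split: if_splits)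
    have lq: "length q = d - 1" and sq: "sorted_wrt (<) q"
      and qi: "\<And>i. i < d - 1 \<Longrightarrow> q ! i < length u \<and> u ! (q ! i) = Suc i"
      using q by (auto simp: emb_tuples_def)
    have "sorted_wrt (<) p" using sq qi pq lq by (auto simp: sorted_wrt_append in_set_conv_nth)
    moreover have "p ! i < length (u @ [x]) \<and> (u @ [x]) ! (p ! i) = Suc i" if i: "i < d" for i
      using qi[of i] pq lq xd d i by (cases "i < d - 1") (auto simp: nth_append)
    ultimately show ?thesis using lq pq d by (simp add: emb_tuples_def)
  qed
qed

lemma card_emb_tuples_snoc:
  assumes d: "d \<ge> 1"
  shows "card (emb_tuples (u @ [x]) d) =
    card (emb_tuples u d) + (if x = d then card (emb_tuples u (d - 1)) else 0)"
proof (cases "x = d")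
  case False then show ?thesis using emb_tuples_snoc[OF d] by simp
next
  case True
  have "q @ [length u] \<notin> emb_tuples u d" for q
    by (auto simp: emb_tuples_def dest!: spec[of _ "length q"])
  then have disj: "emb_tuples u d \<inter> (\<lambda>q. q @ [length u]) ` emb_tuples u (d - 1) = {}" by blast
  have "card (emb_tuples (u @ [x]) d) =
      card (emb_tuples u d) + card ((\<lambda>q. q @ [length u]) ` emb_tuples u (d - 1))"
    using emb_tuples_snoc[OF d] True disj by (simp add: card_Un_disjoint finite_emb_tuples)
  also have "card ((\<lambda>q. q @ [length u]) ` emb_tuples u (d - 1)) = card (emb_tuples u (d - 1))"
    by (rule card_image) (simp add: inj_on_def)
  finally show ?thesis using True by simp
qed

lemma card_emb_tuples_filter:
  "d' \<le> d \<Longrightarrow> card (emb_tuples (filter (\<lambda>a. a \<noteq> Suc d) u) d') = card (emb_tuples u d')"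
proof (induction u arbitrary: d' rule: rev_induct)
  case Nil then show ?case by simp
next
  case (snoc x u)
  show ?case
  proof (cases "d' = 0")
    case True then show ?thesis by (simp add: emb_tuples_0)
  next
    case False
    then have d': "d' \<ge> 1" by simp
    let ?F = "filter (\<lambda>a. a \<noteq> Suc d)"
    show ?thesis
    proof (cases "x = Suc d")
      case True
      then show ?thesis using snoc card_emb_tuples_snoc[OF d', of u x] by simp
    next
      case False
      then have "card (emb_tuples (?F (u @ [x])) d') =
          card (emb_tuples (?F u) d') + (if x = d' then card (emb_tuples (?F u) (d' - 1)) else 0)"
        using card_emb_tuples_snoc[OF d'] by simp
      also have "\<dots> = card (emb_tuples (u @ [x]) d')"
        using snoc card_emb_tuples_snoc[OF d'] by simp
      finally show ?thesis .
    qed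
  qed
qed

lemma length_words: "w \<in> words M d \<Longrightarrow> length w = (\<Sum>j\<in>{1..d}. M j)"
  using sum_count_set[of w "{1..d}"] by (simp add: words_def)

lemma finite_words: "finite (words M d)"
proof -
  have "words M d \<subseteq> {xs. set xs \<subseteq> {1..d} \<and> length xs = (\<Sum>j\<in>{1..d}. M j)}"
    using length_words by (auto simp: words_def)
  then show ?thesis by (rule finite_subset) (rule finite_lists_length_eq, simp)
qed

definition occs :: "nat list \<Rightarrow> nat \<Rightarrow> nat list" where
  "occs u a = filter (\<lambda>i. u ! i = a) [0..<length u]"

lemma occ_pos_eq_occs: "occ_pos u a s = occs u a ! (s - 1)"
  by (simp add: occ_pos_def occs_def)

lemma occs_snoc: "occs (u @ [x]) a = occs u a @ (if x = a then [length u] else [])"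
proof -
  have "filter (\<lambda>i. (u @ [x]) ! i = a) [0..<length u] = filter (\<lambda>i. u ! i = a) [0..<length u]"
    by (rule filter_cong) (auto simp: nth_append)
  then show ?thesis by (simp add: occs_def)
qed

lemma length_occs: "length (occs u a) = count_list u a"
proof (induction u rule: rev_induct)
  case Nil then show ?case by (simp add: occs_def)
next
  case (snoc x u) then show ?case by (simp add: occs_snoc)
qed

lemma set_occs: "set (occs u a) = {i. i < length u \<and> u ! i = a}"
  by (auto simp: occs_def)

lemma sorted_occs: "sorted (occs u a)"
  by (simp add: occs_def sorted_filter[where f=id, simplified])

lemma occ_pos_snoc:
  assumes "1 \<le> s" "s \<le> count_list u a"
  shows "occ_pos (u @ [x]) a s = occ_pos u a s"
proof -
  have "s - 1 < length (occs u a)" using assms by (simp add: length_occs)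
  then show ?thesis by (simp add: occ_pos_eq_occs occs_snoc nth_append)
qed

lemma occ_pos_snoc_last: "occ_pos (u @ [a]) a (Suc (count_list u a)) = length u"
  by (simp add: occ_pos_eq_occs occs_snoc nth_append length_occs)

lemma occ_pos_in_word:
  assumes "1 \<le> s" "s \<le> count_list u a"
  shows "occ_pos u a s < length u \<and> u ! occ_pos u a s = a"
proof -
  have "occs u a ! (s - 1) \<in> set (occs u a)" using assms by (simp add: length_occs)
  then show ?thesis by (simp add: occ_pos_eq_occs set_occs)
qed

lemma le_occ_pos_last:
  assumes "i < length u" "u ! i = a" "count_list u a \<ge> 1"
  shows "i \<le> occ_pos u a (count_list u a)"
proof -
  have "i \<in> set (occs u a)" using assms by (simp add: set_occs)
  then obtain j where j: "j < count_list u a" "occs u a ! j = i"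
    by (auto simp: in_set_conv_nth length_occs)
  then have "occs u a ! j \<le> occs u a ! (count_list u a - 1)"
    using sorted_occs by (intro sorted_nth_mono) (auto simp: length_occs)
  then show ?thesis using j by (simp add: occ_pos_eq_occs)
qed

lemma count_list_take_le: "count_list (take n xs) a \<le> count_list xs a"
  by (metis append_take_drop_id count_list_append le_add1)

lemma count_list_filter_keep: "P a \<Longrightarrow> count_list (filter P xs) a = count_list xs a"
  by (induction xs) auto

lemma S_t_snoc:
  assumes d: "d \<ge> 1" and t: "t \<le> count_list u d"
  shows "S_t d t (u @ [x]) = S_t d t u"
proof (cases "t \<ge> 1")
  case False then show ?thesis by (simp add: S_t_def)
next
  case True
  have occ: "occ_pos (u @ [x]) d t = occ_pos u d t" using occ_pos_snoc[OF True t] .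
  have occ_less: "occ_pos u d t < length u" using occ_pos_in_word[OF True t] by simp
  have "p \<in> emb_tuples u d"
    if p: "p \<in> emb_tuples (u @ [x]) d" and pl: "p ! (d - 1) \<le> occ_pos u d t" for p
  proof -
    have "p ! i < length u" if "i < d" for i
      using emb_tuples_nth_le_last[OF p that] pl occ_less by simp
    with p show ?thesis by (auto simp: emb_tuples_def nth_append)
  qed
  moreover have "emb_tuples u d \<subseteq> emb_tuples (u @ [x]) d" using emb_tuples_snoc[OF d] by blast
  ultimately have "{p \<in> emb_tuples (u @ [x]) d. 1 \<le> t \<and> t \<le> count_list (u @ [x]) d \<and> p ! (d - 1) \<le> occ_pos (u @ [x]) d t}
      = {p \<in> emb_tuples u d. 1 \<le> t \<and> t \<le> count_list u d \<and> p ! (d - 1) \<le> occ_pos u d t}"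
    using occ True t by auto
  then show ?thesis by (simp add: S_t_def)
qed

lemma S_t_count_list:
  assumes d: "d \<ge> 1"
  shows "S_t d (count_list u d) u = card (emb_tuples u d)"
proof (cases "count_list u d \<ge> 1")
  case False
  then have "count_list u d = 0" by simp
  then have "d \<notin> set u" by (simp add: count_list_0_iff)
  moreover have "d \<in> set u" if "p \<in> emb_tuples u d" for p
  proof -
    have "p ! (d - 1) < length u" "u ! (p ! (d - 1)) = d" using that d by (auto simp: emb_tuples_def)
    then show ?thesis by (metis nth_mem)
  qed
  ultimately have "emb_tuples u d = {}" by blast
  then show ?thesis by (simp add: S_t_def)
next
  case True
  then have "{p \<in> emb_tuples u d. 1 \<le> count_list u d \<and> count_list u d \<le> count_list u d
      \<and> p ! (d - 1) \<le> occ_pos u d (count_list u d)} = emb_tuples u d"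
    using d by (auto simp: emb_tuples_def intro!: le_occ_pos_last)
  then show ?thesis by (simp add: S_t_def)
qed

text \<open>Classify the embeddings of \<open>1 2 \<dots> (d+1)\<close> by which occurrence of the letter \<open>d+1\<close> they
  end at; those ending at the \<open>s\<close>-th one are the embeddings of \<open>1 \<dots> d\<close> into the prefix before
  it, which contains \<open>\<pi>\<^sub>d\<^sub>,\<^sub>d\<^sub>+\<^sub>1(s)\<close> letters \<open>d\<close>.\<close>

lemma card_emb_tuples_eq_sum_S_t:
  assumes d: "d \<ge> 1"
  shows "card (emb_tuples W (Suc d)) =
    (\<Sum>s = 1..count_list W (Suc d). S_t d (pi_ij d (Suc d) W s) (filter (\<lambda>a. a \<noteq> Suc d) W))"
proof (induction W rule: rev_induct)
  case Nil
  have "emb_tuples [] (Suc d) = {}" unfolding emb_tuples_def by (auto dest: spec[of _ 0])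
  then show ?case by simp
next
  case (snoc x W)
  let ?F = "filter (\<lambda>a. a \<noteq> Suc d)"
  have pi_snoc: "pi_ij d (Suc d) (W @ [x]) s = pi_ij d (Suc d) W s"
    if "1 \<le> s" "s \<le> count_list W (Suc d)" for s
    using occ_pos_snoc[OF that, of x] occ_pos_in_word[OF that] by (simp add: pi_ij_def)
  have pi_le: "pi_ij d (Suc d) W s \<le> count_list (?F W) d" for s
    by (simp add: pi_ij_def count_list_filter_keep count_list_take_le)
  have old_terms: "(\<Sum>s = 1..count_list W (Suc d). S_t d (pi_ij d (Suc d) (W @ [x]) s) (?F (W @ [x])))
      = (\<Sum>s = 1..count_list W (Suc d). S_t d (pi_ij d (Suc d) W s) (?F W))"
    using pi_snoc S_t_snoc[OF d pi_le] by (intro sum.cong) auto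
  show ?case
  proof (cases "x = Suc d")
    case False
    then show ?thesis using snoc old_terms card_emb_tuples_snoc[of "Suc d" W x] by simp
  next
    case True
    have last: "pi_ij d (Suc d) (W @ [x]) (Suc (count_list W (Suc d))) = count_list W d"
      using True occ_pos_snoc_last[of W "Suc d"] by (simp add: pi_ij_def)
    have "S_t d (count_list W d) (?F (W @ [x])) = card (emb_tuples W d)"
      using True S_t_count_list[OF d, of "?F W"] card_emb_tuples_filter[of d d W]
      by (simp add: count_list_filter_keep)
    then show ?thesis
      using True last old_terms snoc card_emb_tuples_snoc[of "Suc d" W x] by simp
  qed
qed

section \<open>Hop paths as embeddings into the word\<close>

context k_hop_regime
begin

definition lens_list :: "nat \<times> (nat \<Rightarrow> real) \<Rightarrow> real list" where
  "lens_list \<omega> = sort_key (\<lambda>x. - offset r0 k x) (sorted_list_of_set (lens_pts r0 k \<omega>))"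

lemma Wword_eq_map_lens_list: "Wword r0 k \<omega> = map (lensidx r0 k) (lens_list \<omega>)"
  by (simp add: Wword_def lens_list_def)

lemma finite_lens_pts: "finite (lens_pts r0 k \<omega>)"
  by (simp add: lens_pts_def pts_def)

lemma set_lens_list: "set (lens_list \<omega>) = lens_pts r0 k \<omega>"
  and distinct_lens_list: "distinct (lens_list \<omega>)"
  by (simp_all add: lens_list_def finite_lens_pts)

lemma sorted_lens_list: "sorted (map (\<lambda>x. - offset r0 k x) (lens_list \<omega>))"
  by (simp add: lens_list_def)

lemma lens_list_offset_less:
  assumes wd: "W_welldef r0 k \<omega>" and ij: "i < j" "j < length (lens_list \<omega>)"
  shows "offset r0 k (lens_list \<omega> ! j) < offset r0 k (lens_list \<omega> ! i)"
proof -
  have "- offset r0 k (lens_list \<omega> ! i) \<le> - offset r0 k (lens_list \<omega> ! j)"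
    using sorted_nth_mono[OF sorted_lens_list, of i j] ij by simp
  moreover have "lens_list \<omega> ! i \<noteq> lens_list \<omega> ! j"
    using distinct_lens_list ij by (simp add: nth_eq_iff_index_eq)
  moreover have "lens_list \<omega> ! i \<in> lens_pts r0 k \<omega>" "lens_list \<omega> ! j \<in> lens_pts r0 k \<omega>"
    using ij set_lens_list by (metis less_trans nth_mem)+
  ultimately show ?thesis using wd unfolding W_welldef_def inj_on_def by force
qed

text \<open>Since \<open>lens_width < r0\<close>, a point of \<open>L\<^sub>j\<close> and a point of \<open>L\<^sub>j\<^sub>+\<^sub>1\<close> (which starts \<open>r0\<close>
  further right) are adjacent exactly when the offset decreases.\<close>

lemma adj_iff_offset_less:
  assumes j: "j \<in> {1..k-1}" "Suc j \<in> {1..k-1}"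
    and x: "x \<in> lens r0 k j" and y: "y \<in> lens r0 k (Suc j)"
  shows "adj r0 x y \<longleftrightarrow> offset r0 k y < offset r0 k x"
proof -
  have "lens_left (Suc j) = lens_left j + r0" using j by (simp add: lens_left_def of_nat_diff algebra_simps)
  moreover have "x = lens_left j + offset r0 k x" "y = lens_left (Suc j) + offset r0 k y"
    using offset_eq[OF j(1) x] offset_eq[OF j(2) y] by simp_all
  moreover note offset_bounds[OF j(1) x] offset_bounds[OF j(2) y]
  ultimately show ?thesis using lens_width_less_r0 unfolding adj_def by auto
qed

lemma adj_0_lens_1:
  assumes "x \<in> lens r0 k 1"
  shows "adj r0 0 x"
proof -
  have "0 < x" using lens_subset_unit[of 1 x] assms k_ge_3 by simp
  moreover have "x < r0" using assms by (simp add: lens_def)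
  ultimately show ?thesis by (simp add: adj_def)
qed

lemma adj_lens_last_1:
  assumes "x \<in> lens r0 k (k - 1)"
  shows "adj r0 x 1"
proof -
  have "x < 1" using lens_subset_unit[of "k - 1" x] assms k_ge_3 by simp
  moreover have "1 - r0 < x" using assms k_ge_3 by (simp add: lens_def)
  ultimately show ?thesis by (simp add: adj_def)
qed

definition lens_path :: "nat \<times> (nat \<Rightarrow> real) \<Rightarrow> nat list \<Rightarrow> real list" where
  "lens_path \<omega> p = 0 # map (\<lambda>i. lens_list \<omega> ! (p ! i)) [0..<k-1] @ [1]"

lemma length_lens_path: "length (lens_path \<omega> p) = Suc k"
  using k_ge_3 by (simp add: lens_path_def)

lemma lens_path_0: "lens_path \<omega> p ! 0 = 0"
  by (simp add: lens_path_def)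

lemma lens_path_k: "lens_path \<omega> p ! k = 1"
  using k_ge_3 by (simp add: lens_path_def nth_append)

lemma lens_path_nth: "j \<in> {1..k-1} \<Longrightarrow> lens_path \<omega> p ! j = lens_list \<omega> ! (p ! (j - 1))"
  by (cases j) (auto simp: lens_path_def nth_append)

lemma lens_list_nth:
  assumes "i < length (lens_list \<omega>)"
  shows "lens_list \<omega> ! i \<in> pts \<omega>"
    and "lens_list \<omega> ! i \<in> lens r0 k (Wword r0 k \<omega> ! i)"
    and "Wword r0 k \<omega> ! i \<in> {1..k-1}"
  using lens_ptsD[of "lens_list \<omega> ! i" \<omega>] nth_mem[OF assms]
  by (auto simp: set_lens_list Wword_eq_map_lens_list lens_pts_def assms)

lemma lens_path_in_khop_paths:
  assumes wd: "W_welldef r0 k \<omega>" and p: "p \<in> emb_tuples (Wword r0 k \<omega>) (k - 1)"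
  shows "lens_path \<omega> p \<in> khop_paths r0 k \<omega>"
proof -
  let ?vs = "lens_path \<omega> p"
  have pl: "length p = k - 1" and ps: "sorted_wrt (<) p"
    and pi: "\<And>i. i < k - 1 \<Longrightarrow> p ! i < length (lens_list \<omega>) \<and> Wword r0 k \<omega> ! (p ! i) = Suc i"
    using p by (auto simp: emb_tuples_def Wword_eq_map_lens_list)
  have mid: "?vs ! j \<in> lens r0 k j \<and> ?vs ! j \<in> pts \<omega>" if "j \<in> {1..k-1}" for j
    using lens_list_nth[of "p ! (j - 1)" \<omega>] pi[of "j - 1"] that by (auto simp: lens_path_nth)
  have "set ?vs \<subseteq> verts \<omega>"
  proof
    fix v assume "v \<in> set ?vs"
    then obtain j where j: "j < Suc k" "?vs ! j = v" by (metis in_set_conv_nth length_lens_path)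
    consider "j = 0" | "j = k" | "j \<in> {1..k-1}" using j(1) by (cases "j = 0 \<or> j = k") auto
    then show "v \<in> verts \<omega>"
      by cases (use j(2) mid[of j] lens_path_0[of \<omega> p] lens_path_k[of \<omega> p] in \<open>auto simp: verts_def\<close>)
  qed
  moreover have "adj r0 (?vs ! i) (?vs ! Suc i)" if i: "i < k" for i
  proof -
    consider "i = 0" | "Suc i = k" | "i \<in> {1..k-1}" "Suc i \<in> {1..k-1}" using i by force
    then show ?thesis
    proof cases
      case 1 then show ?thesis using adj_0_lens_1 mid[of 1] lens_path_0 k_ge_3 by auto
    next
      case 2 then show ?thesis using adj_lens_last_1 mid[of "k - 1"] lens_path_k k_ge_3 by auto
    next
      case 3
      have "p ! (i - 1) < p ! i" using ps pl 3 by (auto intro: sorted_wrt_nth_less)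
      then have "offset r0 k (lens_list \<omega> ! (p ! i)) < offset r0 k (lens_list \<omega> ! (p ! (i - 1)))"
        using lens_list_offset_less[OF wd] pi[of i] 3 by auto
      then show ?thesis
        using adj_iff_offset_less[OF 3 mid[OF 3(1), THEN conjunct1] mid[OF 3(2), THEN conjunct1]]
        by (simp add: lens_path_nth[OF 3(1)] lens_path_nth[OF 3(2)])
    qed
  qed
  ultimately show ?thesis
    using length_lens_path lens_path_0 lens_path_k by (simp add: khop_paths_def)
qed

lemma khop_path_nth_in_lens_pts:
  assumes vs: "vs \<in> khop_paths r0 k \<omega>" and j: "j \<in> {1..k-1}"
  shows "vs ! j \<in> lens_pts r0 k \<omega>"
proof -
  have "vs ! j \<in> verts \<omega>" "vs ! j \<in> lens r0 k j"
    using vs j khop_path_in_lens[OF vs j] by (auto simp: khop_paths_def intro: nth_mem)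
  then show ?thesis using lens_subset_unit[OF j] j by (force simp: verts_def lens_pts_def)
qed

lemma lens_list_index_less:
  assumes wd: "W_welldef r0 k \<omega>" and ij: "i < length (lens_list \<omega>)" "j < length (lens_list \<omega>)"
    and less: "offset r0 k (lens_list \<omega> ! j) < offset r0 k (lens_list \<omega> ! i)"
  shows "i < j"
proof (rule ccontr)
  assume "\<not> i < j"
  then consider "i = j" | "j < i" by linarith
  then show False
    using lens_list_offset_less[OF wd, of j i] ij less by cases auto
qed

lemma khop_path_eq_lens_path:
  assumes wd: "W_welldef r0 k \<omega>" and vs: "vs \<in> khop_paths r0 k \<omega>"
  shows "\<exists>p\<in>emb_tuples (Wword r0 k \<omega>) (k - 1). lens_path \<omega> p = vs"
proof -
  let ?xs = "lens_list \<omega>" and ?W = "Wword r0 k \<omega>"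
  have lv: "length vs = Suc k" and v0: "vs ! 0 = 0" and vk: "vs ! k = 1"
    and hop: "\<And>i. i < k \<Longrightarrow> adj r0 (vs ! i) (vs ! Suc i)"
    using vs by (auto simp: khop_paths_def)
  have "\<exists>q < length ?xs. ?xs ! q = vs ! j" if "j \<in> {1..k-1}" for j
    using khop_path_nth_in_lens_pts[OF vs that] set_lens_list by (metis in_set_conv_nth)
  then obtain q where q: "\<And>j. j \<in> {1..k-1} \<Longrightarrow> q j < length ?xs \<and> ?xs ! q j = vs ! j"
    by metis
  have q_letter: "?W ! q j = j" if "j \<in> {1..k-1}" for j
    using q[OF that] lensidx_eq[OF that khop_path_in_lens[OF vs that]]
    by (simp add: Wword_eq_map_lens_list)
  have q_less: "q j < q (Suc j)" if "j \<in> {1..k-1}" "Suc j \<in> {1..k-1}" for j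
  proof (rule lens_list_index_less[OF wd])
    show "q j < length ?xs" "q (Suc j) < length ?xs" using q that by blast+
    have "j < k" using that by auto
    then show "offset r0 k (?xs ! q (Suc j)) < offset r0 k (?xs ! q j)"
      using adj_iff_offset_less[OF that khop_path_in_lens[OF vs that(1)] khop_path_in_lens[OF vs that(2)]]
        hop[of j] q[OF that(1)] q[OF that(2)] by simp
  qed
  define p where "p = map (\<lambda>i. q (Suc i)) [0..<k-1]"
  have "sorted_wrt (<) p"
    unfolding p_def by (subst sorted_wrt_iff_nth_Suc_transp) (auto intro: q_less)
  then have "p \<in> emb_tuples ?W (k - 1)"
    using q q_letter by (auto simp: emb_tuples_def p_def Wword_eq_map_lens_list)
  moreover have "lens_path \<omega> p = vs"
  proof (rule nth_equalityI)
    fix j assume "j < length (lens_path \<omega> p)"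
    then have "j < Suc k" by (simp add: length_lens_path)
    then consider "j = 0" | "j = k" | "j \<in> {1..k-1}" by (cases "j = 0 \<or> j = k") auto
    then show "lens_path \<omega> p ! j = vs ! j"
    proof cases
      case 3
      then have "j - 1 < k - 1" "Suc (j - 1) = j" by auto
      then show ?thesis using 3 q by (simp add: lens_path_nth p_def)
    qed (use lens_path_0[of \<omega> p] v0 lens_path_k[of \<omega> p] vk in simp_all)
  qed (simp add: lv length_lens_path)
  ultimately show ?thesis by blast
qed

lemma inj_on_lens_path: "inj_on (lens_path \<omega>) (emb_tuples (Wword r0 k \<omega>) (k - 1))"
proof (rule inj_onI)
  fix p p' assume p: "p \<in> emb_tuples (Wword r0 k \<omega>) (k - 1)" and p': "p' \<in> emb_tuples (Wword r0 k \<omega>) (k - 1)"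
    and eq: "lens_path \<omega> p = lens_path \<omega> p'"
  show "p = p'"
  proof (rule nth_equalityI)
    show "length p = length p'" using p p' by (simp add: emb_tuples_def)
    fix i assume "i < length p"
    then have i: "i < k - 1" "Suc i \<in> {1..k-1}" using p by (auto simp: emb_tuples_def)
    have "lens_list \<omega> ! (p ! i) = lens_list \<omega> ! (p' ! i)"
      using arg_cong[OF eq, of "\<lambda>vs. vs ! Suc i"] lens_path_nth[OF i(2)] by simp
    moreover have "p ! i < length (lens_list \<omega>)" "p' ! i < length (lens_list \<omega>)"
      using p p' i by (auto simp: emb_tuples_def Wword_eq_map_lens_list)
    ultimately show "p ! i = p' ! i" using distinct_lens_list by (simp add: nth_eq_iff_index_eq)
  qed
qed

lemma sigma_eq_card_emb_tuples:
  assumes wd: "W_welldef r0 k \<omega>"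
  shows "sigma r0 k \<omega> = card (emb_tuples (Wword r0 k \<omega>) (k - 1))"
proof -
  have "lens_path \<omega> ` emb_tuples (Wword r0 k \<omega>) (k - 1) = khop_paths r0 k \<omega>"
    using lens_path_in_khop_paths[OF wd] khop_path_eq_lens_path[OF wd] by blast
  then have "bij_betw (lens_path \<omega>) (emb_tuples (Wword r0 k \<omega>) (k - 1)) (khop_paths r0 k \<omega>)"
    using inj_on_lens_path by (simp add: bij_betw_def)
  then show ?thesis unfolding sigma_def by (simp add: bij_betw_same_card)
qed

lemma count_list_Wword: "j \<in> {1..k-1} \<Longrightarrow> count_list (Wword r0 k \<omega>) j = mcount r0 k j \<omega>"
proof -
  assume j: "j \<in> {1..k-1}"
  have "count_list (Wword r0 k \<omega>) j = length (filter (\<lambda>x. lensidx r0 k x = j) (lens_list \<omega>))"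
    by (simp add: Wword_eq_map_lens_list count_list_eq_length_filter filter_map comp_def eq_commute)
  also have "\<dots> = card {x \<in> lens_pts r0 k \<omega>. lensidx r0 k x = j}"
    using distinct_card[of "filter _ (lens_list \<omega>)"] distinct_lens_list set_lens_list by simp
  also have "{x \<in> lens_pts r0 k \<omega>. lensidx r0 k x = j} = pts \<omega> \<inter> lens r0 k j"
    using j lens_ptsD by (auto simp: lens_pts_def lensidx_eq)
  finally show ?thesis by (simp add: mcount_def)
qed

lemma sigma_eq_sum_S_t:
  assumes wd: "W_welldef r0 k \<omega>"
  shows "sigma r0 k \<omega> = (\<Sum>s = 1..mcount r0 k (k - 1) \<omega>.
           S_t (k - 2) (pi_ij (k - 2) (k - 1) (Wword r0 k \<omega>) s)
               (filter (\<lambda>a. a \<noteq> k - 1) (Wword r0 k \<omega>)))"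
proof -
  have e: "k - 1 = Suc (k - 2)" "k - 2 \<ge> 1" "k - 1 \<in> {1..k-1}" using k_ge_3 by auto
  let ?W = "Wword r0 k \<omega>"
  have "sigma r0 k \<omega> = card (emb_tuples ?W (Suc (k - 2)))"
    using sigma_eq_card_emb_tuples[OF wd] by (simp only: e(1))
  also have "\<dots> = (\<Sum>s = 1..count_list ?W (Suc (k - 2)).
      S_t (k - 2) (pi_ij (k - 2) (Suc (k - 2)) ?W s) (filter (\<lambda>a. a \<noteq> Suc (k - 2)) ?W))"
    by (rule card_emb_tuples_eq_sum_S_t[OF e(2)])
  also have "count_list ?W (Suc (k - 2)) = mcount r0 k (Suc (k - 2)) \<omega>"
    using count_list_Wword[OF e(3)] by (simp only: e(1))
  finally show ?thesis unfolding e(1) .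
qed

end

section \<open>Uniform points in the unit interval\<close>

definition unif01 :: "real measure" where "unif01 = uniform_measure lborel {0..1}"

abbreviation unif_seq :: "(nat \<Rightarrow> real) measure" where
  "unif_seq \<equiv> PiM (UNIV :: nat set) (\<lambda>_. unif01)"

lemma sets_unif01 [measurable_cong, simp]: "sets unif01 = sets borel"
  by (simp add: unif01_def)

lemma space_unif01 [simp]: "space unif01 = UNIV"
  by (simp add: unif01_def)

lemma prob_space_unif01: "prob_space unif01"
  unfolding unif01_def by (rule prob_space_uniform_measure) auto

lemma emeasure_unif01: "B \<in> sets borel \<Longrightarrow> emeasure unif01 B = emeasure lborel ({0..1} \<inter> B)"
  by (simp add: unif01_def divide_ennreal_def)

lemma emeasure_unif01_singleton: "emeasure unif01 {a} = 0"
proof -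
  have "emeasure unif01 {a} = emeasure lborel ({0..1} \<inter> {a})" by (simp add: emeasure_unif01)
  also have "\<dots> \<le> emeasure lborel {a}" by (rule emeasure_mono) auto
  finally show ?thesis by simp
qed

interpretation unif_seq: product_prob_space "\<lambda>_::nat. unif01" UNIV
  by (simp add: product_prob_space_def product_sigma_finite_def prob_space_unif01
      prob_space_imp_sigma_finite product_prob_space_axioms_def)

lemma space_unif_seq [simp]: "space unif_seq = UNIV"
  by (simp add: space_PiM)

lemma distr_unif_seq_fun_upd:
  "distr (unif01 \<Otimes>\<^sub>M PiM (UNIV - {i}) (\<lambda>_. unif01)) unif_seq (\<lambda>p. (snd p)(i := fst p)) = unif_seq"
proof -
  have e: "(\<lambda>(x, X). X(i := x)) = (\<lambda>p. (snd p)(i := fst p))" by (auto simp: fun_eq_iff)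
  have ins: "insert i (UNIV - {i}) = UNIV" by auto
  have "distr (unif01 \<Otimes>\<^sub>M PiM (UNIV - {i}) (\<lambda>_. unif01)) (PiM (insert i (UNIV - {i})) (\<lambda>_. unif01))
      (\<lambda>(x, X). X(i := x)) = PiM (insert i (UNIV - {i})) (\<lambda>_. unif01)"
    by (rule distr_pair_PiM_eq_PiM) (auto simp: prob_space_unif01)
  then show ?thesis unfolding e ins .
qed

text \<open>Split off coordinate \<open>i\<close>: for fixed other coordinates, the event is a single point in
  the \<open>i\<close>-th one.\<close>

lemma unif_seq_diff_null:
  assumes "i \<noteq> i'"
  shows "{f. f i - f i' = c} \<in> null_sets unif_seq"
proof -
  let ?P' = "PiM (UNIV - {i}) (\<lambda>_::nat. unif01)"
  let ?T = "\<lambda>p. (snd p)(i := fst p)"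
  interpret P': prob_space ?P' by (rule prob_space_PiM) (simp add: prob_space_unif01)
  interpret U: prob_space unif01 by (rule prob_space_unif01)
  interpret pair_sigma_finite unif01 ?P' by unfold_locales
  have T: "?T \<in> measurable (unif01 \<Otimes>\<^sub>M ?P') unif_seq"
    by (rule measurable_fun_upd[where J="UNIV - {i}"]) auto
  have A: "{f. f i - f i' = c} \<in> sets unif_seq"
  proof -
    have "{f \<in> space unif_seq. f i - f i' = c} \<in> sets unif_seq" by measurable
    then show ?thesis by simp
  qed
  let ?E = "{p \<in> space (unif01 \<Otimes>\<^sub>M ?P'). fst p - snd p i' = c}"
  have "emeasure unif_seq {f. f i - f i' = c} = emeasure (unif01 \<Otimes>\<^sub>M ?P') (?T -` {f. f i - f i' = c} \<inter> space (unif01 \<Otimes>\<^sub>M ?P'))"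
    by (subst distr_unif_seq_fun_upd[symmetric, of i]) (rule emeasure_distr[OF T A])
  also have "?T -` {f. f i - f i' = c} \<inter> space (unif01 \<Otimes>\<^sub>M ?P') = ?E"
    using assms by (auto simp: space_pair_measure)
  also have "emeasure (unif01 \<Otimes>\<^sub>M ?P') ?E = (\<integral>\<^sup>+y. emeasure unif01 ((\<lambda>x. (x, y)) -` ?E) \<partial>?P')"
  proof (rule emeasure_pair_measure_alt2)
    have "i' \<in> UNIV - {i}" using assms by simp
    then show "?E \<in> sets (unif01 \<Otimes>\<^sub>M ?P')" by measurable
  qed
  also have "\<dots> = (\<integral>\<^sup>+y. 0 \<partial>?P')"
  proof (rule nn_integral_cong)
    fix y
    have "emeasure unif01 ((\<lambda>x. (x, y)) -` ?E) \<le> emeasure unif01 {y i' + c}"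
      by (intro emeasure_mono) auto
    then show "emeasure unif01 ((\<lambda>x. (x, y)) -` ?E) = 0"
      using emeasure_unif01_singleton by simp
  qed
  finally show ?thesis using A by (simp add: null_sets_def)
qed

lemma measurable_coordinatewise:
  assumes "\<And>i. h i \<in> borel_measurable borel"
  shows "(\<lambda>f i. h i (f i)) \<in> measurable unif_seq unif_seq"
proof (rule measurable_PiM_single')
  fix i :: nat
  show "(\<lambda>f. h i (f i)) \<in> measurable unif_seq unif01"
    using assms[of i] by (simp add: measurable_cong_sets[OF refl sets_unif01]) measurable
qed (simp add: space_PiM)

lemma distr_coordinatewise:
  assumes hm: "\<And>i. h i \<in> borel_measurable borel" and hd: "\<And>i. distr unif01 unif01 (h i) = unif01"
  shows "distr unif_seq unif_seq (\<lambda>f i. h i (f i)) = unif_seq"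
proof (rule measure_eqI_PiM_infinite)
  let ?T = "\<lambda>f i. h i (f i)"
  have T: "?T \<in> measurable unif_seq unif_seq" by (rule measurable_coordinatewise[OF hm])
  fix A J assume J: "finite J" "J \<subseteq> (UNIV::nat set)" and A: "\<And>i. i \<in> J \<Longrightarrow> A i \<in> sets unif01"
  have hA: "h j -` A j \<in> sets unif01" if "j \<in> J" for j
    using measurable_sets[OF hm[of j], of "A j"] A[OF that] by simp
  have "?T -` prod_emb UNIV (\<lambda>_. unif01) J (Pi\<^sub>E J A) \<inter> space unif_seq
      = prod_emb UNIV (\<lambda>_. unif01) J (Pi\<^sub>E J (\<lambda>j. h j -` A j))"
    by (auto simp: prod_emb_def space_PiM PiE_iff)
  then have "emeasure (distr unif_seq unif_seq ?T) (prod_emb UNIV (\<lambda>_. unif01) J (Pi\<^sub>E J A))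
      = emeasure unif_seq (prod_emb UNIV (\<lambda>_. unif01) J (Pi\<^sub>E J (\<lambda>j. h j -` A j)))"
    using J A by (subst emeasure_distr[OF T]) (auto intro!: sets_PiM_I)
  also have "\<dots> = (\<Prod>j\<in>J. emeasure unif01 (h j -` A j))"
    using J hA by (subst unif_seq.emeasure_PiM_emb) auto
  also have "\<dots> = (\<Prod>j\<in>J. emeasure unif01 (A j))"
  proof (rule prod.cong[OF refl])
    fix j assume j: "j \<in> J"
    have "emeasure (distr unif01 unif01 (h j)) (A j) = emeasure unif01 (h j -` A j \<inter> space unif01)"
      using A[OF j] hm[of j]
      by (intro emeasure_distr) (auto simp: measurable_cong_sets[OF sets_unif01 sets_unif01])
    then show "emeasure unif01 (h j -` A j) = emeasure unif01 (A j)" using hd[of j] by simp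
  qed
  also have "\<dots> = emeasure unif_seq (prod_emb UNIV (\<lambda>_. unif01) J (Pi\<^sub>E J A))"
    using J A by (subst unif_seq.emeasure_PiM_emb) auto
  finally show "emeasure (distr unif_seq unif_seq ?T) (prod_emb UNIV (\<lambda>_. unif01) J (Pi\<^sub>E J A))
      = emeasure unif_seq (prod_emb UNIV (\<lambda>_. unif01) J (Pi\<^sub>E J A))" .
next
  show "finite_measure (distr unif_seq unif_seq (\<lambda>f i. h i (f i)))"
    by (rule prob_space.finite_measure, rule prob_space.prob_space_distr)
      (auto simp: unif_seq.P.prob_space_axioms intro: measurable_coordinatewise[OF hm])
qed auto

lemma emeasure_lborel_translate:
  "S \<in> sets borel \<Longrightarrow> emeasure lborel ((+) t -` S) = emeasure lborel (S :: real set)"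
  using emeasure_distr[of "(+) t" lborel borel S] lborel_distr_plus[of t] by simp

lemma emeasure_Un3:
  assumes "A \<in> sets M" "B \<in> sets M" "C \<in> sets M" "A \<inter> B = {}" "A \<inter> C = {}" "B \<inter> C = {}"
  shows "emeasure M (A \<union> B \<union> C) = emeasure M A + emeasure M B + emeasure M C"
  using assms by (simp add: plus_emeasure Int_Un_distrib2)

definition interval_swap :: "real \<Rightarrow> real \<Rightarrow> real \<Rightarrow> real \<Rightarrow> real" where
  "interval_swap w c1 c2 x =
    (if x \<in> {c1<..<c1+w} then x - c1 + c2 else if x \<in> {c2<..<c2+w} then x - c2 + c1 else x)"

lemma interval_swap_measurable: "interval_swap w c1 c2 \<in> borel_measurable borel"
  unfolding interval_swap_def by measurable

lemma interval_swap_involution: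
  assumes disj: "c1 \<noteq> c2 \<Longrightarrow> {c1<..<c1+w} \<inter> {c2<..<c2+w} = {}"
  shows "interval_swap w c2 c1 (interval_swap w c1 c2 x) = x"
proof (cases "c1 = c2")
  case True then show ?thesis by (simp add: interval_swap_def)
next
  case False
  then have d: "{c1<..<c1+w} \<inter> {c2<..<c2+w} = {}" using disj by simp
  consider "x \<in> {c1<..<c1+w}" | "x \<notin> {c1<..<c1+w}" "x \<in> {c2<..<c2+w}"
    | "x \<notin> {c1<..<c1+w}" "x \<notin> {c2<..<c2+w}" by blast
  then show ?thesis
  proof cases
    case 1 then show ?thesis by (simp add: interval_swap_def)
  next
    case 2
    then have "x - c2 + c1 \<in> {c1<..<c1+w}" by auto
    moreover from this have "x - c2 + c1 \<notin> {c2<..<c2+w}" using d by blast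
    ultimately show ?thesis using 2 unfolding interval_swap_def by (simp only: if_False if_True)
  next
    case 3 then show ?thesis unfolding interval_swap_def by (simp only: if_False)
  qed
qed

lemma interval_swap_vimage:
  fixes c1 c2 w :: real
  assumes b: "0 \<le> c1" "c1 + w \<le> 1" "0 \<le> c2" "c2 + w \<le> 1"
    and disj: "{c1<..<c1+w} \<inter> {c2<..<c2+w} = {}"
  shows "{0..1} \<inter> interval_swap w c1 c2 -` B =
    ({0..1} - {c1<..<c1+w} - {c2<..<c2+w}) \<inter> B
    \<union> (+) (c2 - c1) -` ({c2<..<c2+w} \<inter> B) \<union> (+) (c1 - c2) -` ({c1<..<c1+w} \<inter> B)"
proof -
  let ?I1 = "{c1<..<c1+w}" and ?I2 = "{c2<..<c2+w}"
  have sep: "w \<le> \<bar>c1 - c2\<bar>"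
  proof (rule ccontr)
    assume "\<not> ?thesis"
    then have "(c1 + c2 + w) / 2 \<in> ?I1 \<inter> ?I2" by (auto simp: abs_if field_simps split: if_splits)
    with disj show False by simp
  qed
  show ?thesis
  proof (rule set_eqI)
    fix x
    consider "x \<in> ?I1" | "x \<notin> ?I1" "x \<in> ?I2" | "x \<notin> ?I1" "x \<notin> ?I2" by blast
    then show "x \<in> {0..1} \<inter> interval_swap w c1 c2 -` B \<longleftrightarrow>
        x \<in> ({0..1} - ?I1 - ?I2) \<inter> B \<union> (+) (c2 - c1) -` (?I2 \<inter> B) \<union> (+) (c1 - c2) -` (?I1 \<inter> B)"
    proof cases
      case 1
      then have "x \<notin> ?I2" using disj by blast
      moreover have "c1 - c2 + x \<notin> ?I1" using 1 sep by (auto simp: abs_if split: if_splits)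
      ultimately show ?thesis using 1 b by (auto simp: interval_swap_def algebra_simps)
    next
      case 2
      moreover have "c2 - c1 + x \<notin> ?I2" using 2 sep by (auto simp: abs_if split: if_splits)
      ultimately show ?thesis using b by (auto simp: interval_swap_def algebra_simps)
    next
      case 3
      then show ?thesis by (auto simp: interval_swap_def algebra_simps)
    qed
  qed
qed

lemma distr_interval_swap:
  fixes c1 c2 w :: real
  assumes b: "0 \<le> c1" "c1 + w \<le> 1" "0 \<le> c2" "c2 + w \<le> 1"
    and disj: "c1 \<noteq> c2 \<Longrightarrow> {c1<..<c1+w} \<inter> {c2<..<c2+w} = {}"
  shows "distr unif01 unif01 (interval_swap w c1 c2) = unif01"
proof (rule measure_eqI)
  fix B assume "B \<in> sets (distr unif01 unif01 (interval_swap w c1 c2))"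
  then have B: "B \<in> sets borel" by simp
  let ?I1 = "{c1<..<c1+w}" and ?I2 = "{c2<..<c2+w}" and ?R = "{0..1} - {c1<..<c1+w} - {c2<..<c2+w}"
  have "emeasure (distr unif01 unif01 (interval_swap w c1 c2)) B
      = emeasure lborel ({0..1} \<inter> interval_swap w c1 c2 -` B)"
    using B measurable_sets[OF interval_swap_measurable B]
    by (simp add: emeasure_distr measurable_cong_sets[OF sets_unif01 sets_unif01]
        interval_swap_measurable emeasure_unif01)
  also have "\<dots> = emeasure lborel ({0..1} \<inter> B)"
  proof (cases "c1 = c2")
    case True
    then have "interval_swap w c1 c2 = (\<lambda>x. x)" by (auto simp: interval_swap_def fun_eq_iff)
    then show ?thesis by simp
  next
    case False
    then have d12: "?I1 \<inter> ?I2 = {}" using disj by simp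
    have m: "(+) (c2 - c1) -` (?I2 \<inter> B) \<in> sets borel" "(+) (c1 - c2) -` (?I1 \<inter> B) \<in> sets borel"
      using B by (auto intro: measurable_sets_borel[of "(+) _"])
    have "emeasure lborel ({0..1} \<inter> interval_swap w c1 c2 -` B) = emeasure lborel (?R \<inter> B)
        + emeasure lborel ((+) (c2 - c1) -` (?I2 \<inter> B)) + emeasure lborel ((+) (c1 - c2) -` (?I1 \<inter> B))"
      unfolding interval_swap_vimage[OF b d12] using B m d12
      by (intro emeasure_Un3) (auto simp: algebra_simps)
    also have "\<dots> = emeasure lborel (?R \<inter> B) + emeasure lborel (?I2 \<inter> B) + emeasure lborel (?I1 \<inter> B)"
      using B emeasure_lborel_translate[of "?I2 \<inter> B" "c2 - c1"]
        emeasure_lborel_translate[of "?I1 \<inter> B" "c1 - c2"] by simp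
    also have "\<dots> = emeasure lborel ({0..1} \<inter> B)"
    proof -
      have split: "{0..1} \<inter> B = ?R \<inter> B \<union> ?I2 \<inter> B \<union> ?I1 \<inter> B" using b by auto
      show ?thesis unfolding split using B d12 by (intro emeasure_Un3[symmetric]) auto
    qed
    finally show ?thesis .
  qed
  also have "\<dots> = emeasure unif01 B" using B by (simp add: emeasure_unif01)
  finally show "emeasure (distr unif01 unif01 (interval_swap w c1 c2)) B = emeasure unif01 B" .
qed simp

section \<open>Measurability through finitely many comparisons\<close>

lemma insort_key_map:
  assumes "\<forall>y\<in>set ys. (k2 (\<phi> x) \<le> k2 (\<phi> y) \<longleftrightarrow> k1 x \<le> k1 y)"
  shows "insort_key k2 (\<phi> x) (map \<phi> ys) = map \<phi> (insort_key k1 x ys)"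
  using assms by (induction ys) auto

lemma sort_key_map:
  assumes "\<forall>x\<in>set xs. \<forall>y\<in>set xs. (k2 (\<phi> x) \<le> k2 (\<phi> y) \<longleftrightarrow> k1 x \<le> k1 y)"
  shows "sort_key k2 (map \<phi> xs) = map \<phi> (sort_key k1 xs)"
  using assms
proof (induction xs)
  case Nil then show ?case by simp
next
  case (Cons x xs)
  then have "sort_key k2 (map \<phi> xs) = map \<phi> (sort_key k1 xs)" by simp
  moreover have "\<forall>y\<in>set (sort_key k1 xs). (k2 (\<phi> x) \<le> k2 (\<phi> y) \<longleftrightarrow> k1 x \<le> k1 y)"
    using Cons.prems by simp
  ultimately show ?case by (simp add: insort_key_map)
qed

lemma sorted_list_of_set_image:
  assumes A: "finite A" and mono: "\<And>x y. x \<in> A \<Longrightarrow> y \<in> A \<Longrightarrow> x < y \<Longrightarrow> \<phi> x < (\<phi> y::'b::linorder)"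
  shows "sorted_list_of_set (\<phi> ` A) = map \<phi> (sorted_list_of_set (A::'a::linorder set))"
proof -
  have inj: "inj_on \<phi> A"
    by (rule inj_onI) (metis mono linorder_neq_iff order_less_irrefl)
  have "sorted_wrt (<) (sorted_list_of_set A)" using A by simp
  then have "sorted_wrt (\<lambda>x y. \<phi> x < \<phi> y) (sorted_list_of_set A)"
    by (rule sorted_wrt_mono_rel[rotated]) (use A mono in simp)
  then have "sorted_wrt (<) (map \<phi> (sorted_list_of_set A))"
    by (simp add: sorted_wrt_map)
  then have s1: "sorted (map \<phi> (sorted_list_of_set A))" "distinct (map \<phi> (sorted_list_of_set A))"
    by (simp_all add: strict_sorted_iff)
  have s2: "set (map \<phi> (sorted_list_of_set A)) = \<phi> ` A" using A by simp
  show ?thesis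
    by (rule sorted_distinct_set_unique) (use A s1 s2 in simp_all)
qed

lemma ex_factor_map:
  assumes "\<And>i i'. i < n \<Longrightarrow> i' < n \<Longrightarrow> f i = f i' \<Longrightarrow> g i = g i'"
  shows "\<exists>\<phi>. \<forall>i<n. \<phi> (f i) = g i"
proof -
  define \<phi> where "\<phi> x = g (SOME i. i < n \<and> f i = x)" for x
  have "\<phi> (f i) = g i" if i: "i < n" for i
  proof -
    have "\<exists>i'. i' < n \<and> f i' = f i" using i by blast
    then have "(SOME i'. i' < n \<and> f i' = f i) < n \<and> f (SOME i'. i' < n \<and> f i' = f i) = f i"
      by (rule someI_ex)
    then show ?thesis unfolding \<phi>_def using assms i by blast
  qed
  then show ?thesis by blast
qed

context k_hop_regime
begin

lemma lens_pts_image: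
  assumes pts: "pts \<omega>' = \<phi> ` pts \<omega>"
    and lens: "\<And>x j. x \<in> pts \<omega> \<Longrightarrow> j \<in> {1..k-1} \<Longrightarrow> \<phi> x \<in> lens r0 k j \<longleftrightarrow> x \<in> lens r0 k j"
  shows "lens_pts r0 k \<omega>' = \<phi> ` lens_pts r0 k \<omega>"
    and "j \<in> {1..k-1} \<Longrightarrow> pts \<omega>' \<inter> lens r0 k j = \<phi> ` (pts \<omega> \<inter> lens r0 k j)"
proof -
  show "lens_pts r0 k \<omega>' = \<phi> ` lens_pts r0 k \<omega>"
    unfolding lens_pts_def pts using lens by blast
  show "pts \<omega>' \<inter> lens r0 k j = \<phi> ` (pts \<omega> \<inter> lens r0 k j)" if "j \<in> {1..k-1}"
    unfolding pts using lens that by blast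
qed

lemma Wword_image_eq:
  assumes pts: "pts \<omega>' = \<phi> ` pts \<omega>"
    and mono: "\<And>x y. x \<in> pts \<omega> \<Longrightarrow> y \<in> pts \<omega> \<Longrightarrow> x < y \<Longrightarrow> \<phi> x < \<phi> y"
    and lens: "\<And>x j. x \<in> pts \<omega> \<Longrightarrow> j \<in> {1..k-1} \<Longrightarrow> \<phi> x \<in> lens r0 k j \<longleftrightarrow> x \<in> lens r0 k j"
    and off: "\<And>x y. x \<in> lens_pts r0 k \<omega> \<Longrightarrow> y \<in> lens_pts r0 k \<omega> \<Longrightarrow>
                 offset r0 k (\<phi> x) \<le> offset r0 k (\<phi> y) \<longleftrightarrow> offset r0 k x \<le> offset r0 k y"
  shows "Wword r0 k \<omega>' = Wword r0 k \<omega>"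
    and "W_welldef r0 k \<omega>' = W_welldef r0 k \<omega>"
    and "\<And>j. j \<in> {1..k-1} \<Longrightarrow> mcount r0 k j \<omega>' = mcount r0 k j \<omega>"
proof -
  have inj: "inj_on \<phi> (pts \<omega>)"
    by (rule inj_onI) (metis mono linorder_neq_iff order_less_irrefl)
  have inj_lens: "inj_on \<phi> (lens_pts r0 k \<omega>)"
    using inj by (rule inj_on_subset) (auto simp: lens_pts_def)
  have image: "lens_pts r0 k \<omega>' = \<phi> ` lens_pts r0 k \<omega>"
    "\<And>j. j \<in> {1..k-1} \<Longrightarrow> pts \<omega>' \<inter> lens r0 k j = \<phi> ` (pts \<omega> \<inter> lens r0 k j)"
    using lens_pts_image[OF pts lens] by blast+
  have idx: "lensidx r0 k (\<phi> x) = lensidx r0 k x" if "x \<in> lens_pts r0 k \<omega>" for x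
    using lens_ptsD[OF that] lens that by (metis IntD1 lens_pts_def lensidx_eq)
  have "sorted_list_of_set (lens_pts r0 k \<omega>') = map \<phi> (sorted_list_of_set (lens_pts r0 k \<omega>))"
    unfolding image(1)
    by (rule sorted_list_of_set_image[OF finite_lens_pts]) (auto simp: lens_pts_def intro: mono)
  then have "lens_list \<omega>' = map \<phi> (lens_list \<omega>)"
    unfolding lens_list_def by (simp only:) (rule sort_key_map, auto simp: finite_lens_pts off)
  then show "Wword r0 k \<omega>' = Wword r0 k \<omega>"
    using set_lens_list idx by (simp add: Wword_eq_map_lens_list)
  have "offset r0 k (\<phi> x) = offset r0 k (\<phi> y) \<longleftrightarrow> offset r0 k x = offset r0 k y"
    if "x \<in> lens_pts r0 k \<omega>" "y \<in> lens_pts r0 k \<omega>" for x y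
    using off[OF that] off[OF that(2,1)] by linarith
  then have "inj_on (offset r0 k \<circ> \<phi>) (lens_pts r0 k \<omega>) \<longleftrightarrow> inj_on (offset r0 k) (lens_pts r0 k \<omega>)"
    unfolding inj_on_def comp_def by blast
  then show "W_welldef r0 k \<omega>' = W_welldef r0 k \<omega>"
    using inj_lens by (simp add: W_welldef_def image(1) inj_on_image_iff comp_inj_on_iff)
  show "mcount r0 k j \<omega>' = mcount r0 k j \<omega>" if "j \<in> {1..k-1}" for j
    unfolding mcount_def image(2)[OF that] using inj by (simp add: card_image inj_on_Int)
qed

text \<open>Whether a point lies in a lens, and how the offsets of two points compare, only depends on
  comparisons of the points with the finitely many lens endpoints \<open>crit_points\<close> and of their
  differences with the finitely many lens spacings \<open>crit_gaps\<close>.\<close>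

definition crit_points :: "real set" where
  "crit_points = lens_left ` {1..k-1} \<union> (\<lambda>j. real j * r0) ` {1..k-1}"

definition crit_gaps :: "real set" where
  "crit_gaps = (\<lambda>(j, j'). (real j - real j') * r0) ` ({1..k-1} \<times> {1..k-1})"

lemma finite_crit_points: "finite crit_points"
  and finite_crit_gaps: "finite crit_gaps"
  by (simp_all add: crit_points_def crit_gaps_def)

lemma zero_in_crit_gaps: "0 \<in> crit_gaps"
  using k_ge_3 unfolding crit_gaps_def by (auto intro!: image_eqI[where x="(1, 1)"])

lemma lens_left_diff_in_crit_gaps:
  "j \<in> {1..k-1} \<Longrightarrow> j' \<in> {1..k-1} \<Longrightarrow> lens_left j - lens_left j' \<in> crit_gaps"
  using lens_left_diff[of j j'] unfolding crit_gaps_def by force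

definition pattern ::
    "nat \<Rightarrow> (nat \<Rightarrow> real) \<Rightarrow> (nat \<times> real \<Rightarrow> bool) \<times> (nat \<times> real \<Rightarrow> bool) \<times> (nat \<times> nat \<times> real \<Rightarrow> bool)" where
  "pattern n f = ((\<lambda>(i, c). i < n \<and> c \<in> crit_points \<and> f i < c),
                  (\<lambda>(i, c). i < n \<and> c \<in> crit_points \<and> c < f i),
                  (\<lambda>(i, i', c). i < n \<and> i' < n \<and> c \<in> crit_gaps \<and> f i - f i' < c))"

lemma pattern_eq_iff: "pattern n f = pattern n g \<longleftrightarrow>
   (\<forall>i\<in>{..<n}. \<forall>c\<in>crit_points. (f i < c) = (g i < c) \<and> (c < f i) = (c < g i)) \<and>
   (\<forall>i\<in>{..<n}. \<forall>i'\<in>{..<n}. \<forall>c\<in>crit_gaps. (f i - f i' < c) = (g i - g i' < c))"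
  unfolding pattern_def by (simp add: fun_eq_iff) blast

lemma pattern_eqD:
  assumes eq: "pattern n f = pattern n g"
  shows "i < n \<Longrightarrow> i' < n \<Longrightarrow> f i < f i' \<longleftrightarrow> g i < g i'"
    and "i < n \<Longrightarrow> j \<in> {1..k-1} \<Longrightarrow> f i \<in> lens r0 k j \<longleftrightarrow> g i \<in> lens r0 k j"
    and "i < n \<Longrightarrow> i' < n \<Longrightarrow> j \<in> {1..k-1} \<Longrightarrow> j' \<in> {1..k-1} \<Longrightarrow>
      f i \<in> lens r0 k j \<Longrightarrow> f i' \<in> lens r0 k j' \<Longrightarrow>
      offset r0 k (f i) \<le> offset r0 k (f i') \<longleftrightarrow> offset r0 k (g i) \<le> offset r0 k (g i')"
proof -
  have points: "\<And>i c. i < n \<Longrightarrow> c \<in> crit_points \<Longrightarrow> (f i < c) = (g i < c) \<and> (c < f i) = (c < g i)"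
    and gaps: "\<And>i i' c. i < n \<Longrightarrow> i' < n \<Longrightarrow> c \<in> crit_gaps \<Longrightarrow> (f i - f i' < c) = (g i - g i' < c)"
    using eq unfolding pattern_eq_iff by auto
  show "i < n \<Longrightarrow> i' < n \<Longrightarrow> f i < f i' \<longleftrightarrow> g i < g i'"
    using gaps[OF _ _ zero_in_crit_gaps, of i i'] by linarith
  show lens_iff: "f i \<in> lens r0 k j \<longleftrightarrow> g i \<in> lens r0 k j" if "i < n" "j \<in> {1..k-1}" for i j
  proof -
    have "lens_left j \<in> crit_points" "real j * r0 \<in> crit_points"
      using that(2) by (auto simp: crit_points_def)
    then show ?thesis using points[OF that(1)] by (simp add: lens_eq_left_right)
  qed
  assume i: "i < n" "i' < n" and j: "j \<in> {1..k-1}" "j' \<in> {1..k-1}"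
    and f: "f i \<in> lens r0 k j" "f i' \<in> lens r0 k j'"
  have g: "g i \<in> lens r0 k j" "g i' \<in> lens r0 k j'"
    using lens_iff[OF i(1) j(1)] lens_iff[OF i(2) j(2)] f by simp_all
  have "offset r0 k (f i) \<le> offset r0 k (f i') \<longleftrightarrow> \<not> f i' - f i < lens_left j' - lens_left j"
    using offset_eq[OF j(1) f(1)] offset_eq[OF j(2) f(2)] by auto
  also have "\<dots> \<longleftrightarrow> \<not> g i' - g i < lens_left j' - lens_left j"
    using gaps[OF i(2,1) lens_left_diff_in_crit_gaps[OF j(2,1)]] by simp
  also have "\<dots> \<longleftrightarrow> offset r0 k (g i) \<le> offset r0 k (g i')"
    using offset_eq[OF j(1) g(1)] offset_eq[OF j(2) g(2)] by auto
  finally show "offset r0 k (f i) \<le> offset r0 k (f i') \<longleftrightarrow> offset r0 k (g i) \<le> offset r0 k (g i')" .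
qed

lemma pattern_determines:
  assumes eq: "pattern n f = pattern n g"
  shows "Wword r0 k (n, g) = Wword r0 k (n, f)"
    and "W_welldef r0 k (n, g) = W_welldef r0 k (n, f)"
    and "\<And>j. j \<in> {1..k-1} \<Longrightarrow> mcount r0 k j (n, g) = mcount r0 k j (n, f)"
proof -
  note less = pattern_eqD(1)[OF eq] and lens = pattern_eqD(2)[OF eq] and off = pattern_eqD(3)[OF eq]
  have "g i = g i'" if "i < n" "i' < n" "f i = f i'" for i i'
  proof -
    have "\<not> g i < g i'" "\<not> g i' < g i"
      using less[OF that(1,2)] less[OF that(2,1)] that(3) by simp_all
    then show ?thesis by linarith
  qed
  then obtain \<phi> where \<phi>: "\<And>i. i < n \<Longrightarrow> \<phi> (f i) = g i"
    using ex_factor_map[of n f g] by blast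
  have pts_f: "pts (n, f) = f ` {..<n}" and pts_g: "pts (n, g) = g ` {..<n}"
    by (simp_all add: pts_def)
  have pts: "pts (n, g) = \<phi> ` pts (n, f)"
    unfolding pts_f pts_g image_image using \<phi> by (intro image_cong) simp_all
  have mono: "\<phi> x < \<phi> y" if xy: "x \<in> pts (n, f)" "y \<in> pts (n, f)" "x < y" for x y
  proof -
    obtain i i' where "i < n" "x = f i" "i' < n" "y = f i'" using xy(1,2) by (auto simp: pts_f)
    then show ?thesis using less[of i i'] \<phi> xy(3) by simp
  qed
  have lens_iff: "\<phi> x \<in> lens r0 k j \<longleftrightarrow> x \<in> lens r0 k j" if x: "x \<in> pts (n, f)" "j \<in> {1..k-1}" for x j
  proof -
    obtain i where "i < n" "x = f i" using x(1) by (auto simp: pts_f)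
    then show ?thesis using lens[of i j] \<phi> x(2) by simp
  qed
  have off_iff: "offset r0 k (\<phi> x) \<le> offset r0 k (\<phi> y) \<longleftrightarrow> offset r0 k x \<le> offset r0 k y"
    if xy: "x \<in> lens_pts r0 k (n, f)" "y \<in> lens_pts r0 k (n, f)" for x y
  proof -
    obtain i where i: "i < n" "x = f i" using xy(1) by (auto simp: lens_pts_def pts_f)
    obtain i' where i': "i' < n" "y = f i'" using xy(2) by (auto simp: lens_pts_def pts_f)
    have x: "f i \<in> lens r0 k (lensidx r0 k x)" "lensidx r0 k x \<in> {1..k-1}"
      using lens_ptsD[OF xy(1)] i(2) by auto
    have y: "f i' \<in> lens r0 k (lensidx r0 k y)" "lensidx r0 k y \<in> {1..k-1}"
      using lens_ptsD[OF xy(2)] i'(2) by auto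
    show ?thesis
      using off[OF i(1) i'(1) x(2) y(2) x(1) y(1)] \<phi>[OF i(1)] \<phi>[OF i'(1)] i(2) i'(2) by simp
  qed
  note image = Wword_image_eq[OF pts mono lens_iff off_iff]
  show "Wword r0 k (n, g) = Wword r0 k (n, f)" by (rule image(1))
  show "W_welldef r0 k (n, g) = W_welldef r0 k (n, f)" by (rule image(2))
  show "mcount r0 k j (n, g) = mcount r0 k j (n, f)" if "j \<in> {1..k-1}" for j
    using image(3) that by blast
qed

lemma pattern_class_measurable: "{g. pattern n g = pattern n f} \<in> sets unif_seq"
proof -
  have "{g \<in> space unif_seq. (\<forall>i\<in>{..<n}. \<forall>c\<in>crit_points. (g i < c) = (f i < c) \<and> (c < g i) = (c < f i)) \<and>
   (\<forall>i\<in>{..<n}. \<forall>i'\<in>{..<n}. \<forall>c\<in>crit_gaps. (g i - g i' < c) = (f i - f i' < c))} \<in> sets unif_seq"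
    using finite_crit_points finite_crit_gaps by measurable
  then show ?thesis by (simp add: pattern_eq_iff)
qed

lemma finite_range_pattern: "finite (range (pattern n))"
proof -
  let ?S1 = "(\<lambda>A x. x \<in> A) ` Pow ({..<n} \<times> crit_points)"
  let ?S3 = "(\<lambda>A x. x \<in> A) ` Pow ({..<n} \<times> {..<n} \<times> crit_gaps)"
  have "range (pattern n) \<subseteq> ?S1 \<times> ?S1 \<times> ?S3"
  proof
    fix p assume "p \<in> range (pattern n)"
    then obtain f where p: "p = pattern n f" by blast
    have "fst p = (\<lambda>x. x \<in> {(i, c). i < n \<and> c \<in> crit_points \<and> f i < c})" by (auto simp: p pattern_def)
    moreover have "fst (snd p) = (\<lambda>x. x \<in> {(i, c). i < n \<and> c \<in> crit_points \<and> c < f i})" by (auto simp: p pattern_def)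
    moreover have "snd (snd p) = (\<lambda>x. x \<in> {(i, i', c). i < n \<and> i' < n \<and> c \<in> crit_gaps \<and> f i - f i' < c})" by (auto simp: p pattern_def)
    ultimately show "p \<in> ?S1 \<times> ?S1 \<times> ?S3"
      unfolding mem_Times_iff by (intro conjI) (rule image_eqI, assumption, force)+
  qed
  then show ?thesis by (rule finite_subset) (simp add: finite_crit_points finite_crit_gaps)
qed

lemma measurable_pattern_invariant:
  assumes inv: "\<And>f g. pattern n f = pattern n g \<Longrightarrow> Q g = Q f"
  shows "{f. Q f} \<in> sets unif_seq"
proof -
  have "{f. Q f} = (\<Union>p\<in>pattern n ` {f. Q f}. {g. pattern n g = p})"
  proof (intro equalityI subsetI)
    fix f assume "f \<in> {f. Q f}" then show "f \<in> (\<Union>p\<in>pattern n ` {f. Q f}. {g. pattern n g = p})" by blast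
  next
    fix g assume "g \<in> (\<Union>p\<in>pattern n ` {f. Q f}. {g. pattern n g = p})"
    then obtain f where "Q f" "pattern n g = pattern n f" by blast
    then show "g \<in> {f. Q f}" using inv[of g f] by simp
  qed
  also have "\<dots> \<in> sets unif_seq"
  proof (rule sets.finite_UN)
    show "finite (pattern n ` {f. Q f})" using finite_range_pattern by (rule finite_subset[rotated]) auto
  qed (auto intro: pattern_class_measurable)
  finally show ?thesis .
qed

section \<open>Decomposition of the event \<open>W = w\<close> into lens regions\<close>

lemma lens_list_unique:
  assumes set: "set ys = lens_pts r0 k \<omega>" and dis: "distinct ys"
    and ord: "\<And>t t'. t < t' \<Longrightarrow> t' < length ys \<Longrightarrow> offset r0 k (ys ! t') < offset r0 k (ys ! t)"
  shows "W_welldef r0 k \<omega> \<and> lens_list \<omega> = ys"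
proof -
  let ?key = "\<lambda>x. - offset r0 k x"
  have inj_key: "inj_on ?key (set ys)"
  proof (rule inj_onI)
    fix x y assume "x \<in> set ys" "y \<in> set ys" and eq: "?key x = ?key y"
    then obtain t t' where t: "t < length ys" "ys ! t = x" "t' < length ys" "ys ! t' = y"
      by (auto simp: in_set_conv_nth)
    then show "x = y" using ord[of t t'] ord[of t' t] eq by (cases t t' rule: linorder_cases) auto
  qed
  then have wd: "W_welldef r0 k \<omega>" using set by (simp add: W_welldef_def inj_on_def)
  have "sorted (map ?key ys)"
    unfolding sorted_iff_nth_mono_less by (auto simp: less_imp_le ord)
  moreover have "sorted (map ?key (lens_list \<omega>))" by (rule sorted_lens_list)
  moreover have "distinct (map ?key ys)" "distinct (map ?key (lens_list \<omega>))"
    using dis distinct_lens_list inj_key set_lens_list set by (simp_all add: distinct_map)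
  ultimately have "map ?key (lens_list \<omega>) = map ?key ys"
    using sorted_distinct_set_unique set_lens_list set by (metis set_map)
  moreover have "inj_on ?key (set (lens_list \<omega>) \<union> set ys)" using inj_key by (simp add: set_lens_list set)
  ultimately have "lens_list \<omega> = ys" by (rule map_inj_on)
  with wd show ?thesis by simp
qed

text \<open>Configurations of \<open>n\<close> distinct points in which point \<open>\<beta> t\<close> produces the \<open>t\<close>-th letter
  \<open>w ! t\<close> of the word and no other point lies in a lens.\<close>

definition lens_region :: "nat \<Rightarrow> nat \<Rightarrow> (nat \<Rightarrow> nat) \<Rightarrow> nat list \<Rightarrow> (nat \<Rightarrow> real) set" where
  "lens_region n m \<beta> w = {f. inj_on f {..<n}
      \<and> (\<forall>t<m. f (\<beta> t) \<in> lens r0 k (w ! t))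
      \<and> (\<forall>i<n. i \<notin> \<beta> ` {..<m} \<longrightarrow> (\<forall>j\<in>{1..k-1}. f i \<notin> lens r0 k j))
      \<and> (\<forall>t t'. t < t' \<longrightarrow> t' < m \<longrightarrow> f (\<beta> t') - lens_left (w ! t') < f (\<beta> t) - lens_left (w ! t))}"

definition index_injections :: "nat \<Rightarrow> nat \<Rightarrow> (nat \<Rightarrow> nat) set" where
  "index_injections n m = {\<beta> \<in> {..<m} \<rightarrow>\<^sub>E {..<n}. inj_on \<beta> {..<m}}"

lemma finite_index_injections: "finite (index_injections n m)"
  unfolding index_injections_def by (rule finite_subset[of _ "{..<m} \<rightarrow>\<^sub>E {..<n}"]) (auto intro: finite_PiE)

lemma lens_list_of_lens_region:
  assumes f: "f \<in> lens_region n m \<beta> w" and \<beta>: "\<beta> \<in> index_injections n m"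
    and w: "set w \<subseteq> {1..k-1}" "length w = m"
  shows "W_welldef r0 k (n, f) \<and> lens_list (n, f) = map (\<lambda>t. f (\<beta> t)) [0..<m]"
proof -
  let ?ys = "map (\<lambda>t. f (\<beta> t)) [0..<m]"
  have inj: "inj_on f {..<n}" and in_lens: "\<And>t. t < m \<Longrightarrow> f (\<beta> t) \<in> lens r0 k (w ! t)"
    and outside: "\<And>i j. i < n \<Longrightarrow> i \<notin> \<beta> ` {..<m} \<Longrightarrow> j \<in> {1..k-1} \<Longrightarrow> f i \<notin> lens r0 k j"
    and ord: "\<And>t t'. t < t' \<Longrightarrow> t' < m \<Longrightarrow> f (\<beta> t') - lens_left (w ! t') < f (\<beta> t) - lens_left (w ! t)"
    using f by (auto simp: lens_region_def)
  have \<beta>n: "\<And>t. t < m \<Longrightarrow> \<beta> t < n" and inj\<beta>: "inj_on \<beta> {..<m}"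
    using \<beta> by (auto simp: index_injections_def)
  have wt: "\<And>t. t < m \<Longrightarrow> w ! t \<in> {1..k-1}" using w nth_mem by blast
  have "set ?ys = lens_pts r0 k (n, f)"
  proof (intro equalityI subsetI)
    fix x assume "x \<in> set ?ys"
    then obtain t where t: "t < m" "x = f (\<beta> t)" by auto
    then show "x \<in> lens_pts r0 k (n, f)" using in_lens[OF t(1)] wt[OF t(1)] \<beta>n[OF t(1)]
      by (auto simp: lens_pts_def pts_def)
  next
    fix x assume "x \<in> lens_pts r0 k (n, f)"
    then obtain i j where "i < n" "x = f i" "j \<in> {1..k-1}" "x \<in> lens r0 k j"
      by (auto simp: lens_pts_def pts_def)
    with outside show "x \<in> set ?ys" by force
  qed
  moreover have "distinct ?ys"
    using inj\<beta> inj \<beta>n by (auto simp: distinct_map inj_on_def)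
  moreover have "offset r0 k (?ys ! t') < offset r0 k (?ys ! t)" if "t < t'" "t' < length ?ys" for t t'
    using that ord[of t t'] offset_eq[OF wt in_lens, of t] offset_eq[OF wt in_lens, of t'] by simp
  ultimately show ?thesis by (rule lens_list_unique)
qed

lemma Wword_of_lens_region:
  assumes f: "f \<in> lens_region n m \<beta> w" and \<beta>: "\<beta> \<in> index_injections n m"
    and w: "set w \<subseteq> {1..k-1}" "length w = m"
  shows "Wword r0 k (n, f) = w"
proof -
  have wt: "\<And>t. t < m \<Longrightarrow> w ! t \<in> {1..k-1}" using w nth_mem by blast
  have "\<And>t. t < m \<Longrightarrow> lensidx r0 k (f (\<beta> t)) = w ! t"
    using f by (intro lensidx_eq wt) (auto simp: lens_region_def)
  then show ?thesis using lens_list_of_lens_region[OF assms] w(2)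
    by (auto simp: Wword_eq_map_lens_list intro!: nth_equalityI)
qed

lemma lens_region_of_Wword:
  assumes W: "Wword r0 k (n, f) = w" and inj: "inj_on f {..<n}" and wd: "W_welldef r0 k (n, f)"
  shows "\<exists>\<beta>\<in>index_injections n (length w). f \<in> lens_region n (length w) \<beta> w"
proof -
  let ?xs = "lens_list (n, f)" and ?m = "length w"
  have w_eq: "w = map (lensidx r0 k) ?xs" using W by (simp add: Wword_eq_map_lens_list)
  then have len: "length ?xs = ?m" by simp
  have xp: "\<And>t. t < ?m \<Longrightarrow> ?xs ! t \<in> lens_pts r0 k (n, f)"
    using len set_lens_list by (metis nth_mem)
  have xw: "?xs ! t \<in> lens r0 k (w ! t) \<and> w ! t \<in> {1..k-1}" if "t < ?m" for t
    using lens_ptsD[OF xp[OF that]] that len by (subst w_eq, simp)+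
  have xf: "\<And>t. t < ?m \<Longrightarrow> ?xs ! t \<in> f ` {..<n}"
    using xp by (auto simp: lens_pts_def pts_def)
  define \<beta> where "\<beta> = restrict (\<lambda>t. the_inv_into {..<n} f (?xs ! t)) {..<?m}"
  have \<beta>n: "\<And>t. t < ?m \<Longrightarrow> \<beta> t < n"
    unfolding \<beta>_def using the_inv_into_into[OF inj xf] by auto
  have f\<beta>: "\<And>t. t < ?m \<Longrightarrow> f (\<beta> t) = ?xs ! t"
    unfolding \<beta>_def using f_the_inv_into_f[OF inj xf] by auto
  have "inj_on \<beta> {..<?m}"
  proof (rule inj_onI)
    fix t t' assume "t \<in> {..<?m}" "t' \<in> {..<?m}" "\<beta> t = \<beta> t'"
    then have "?xs ! t = ?xs ! t'" "t < length ?xs" "t' < length ?xs"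
      using f\<beta>[of t] f\<beta>[of t'] len by auto
    then show "t = t'" using distinct_lens_list by (simp add: nth_eq_iff_index_eq)
  qed
  then have \<beta>: "\<beta> \<in> index_injections n ?m" using \<beta>n by (auto simp: index_injections_def \<beta>_def)
  have "f i \<notin> lens r0 k j" if i: "i < n" "i \<notin> \<beta> ` {..<?m}" "j \<in> {1..k-1}" for i j
  proof
    assume "f i \<in> lens r0 k j"
    then have "f i \<in> lens_pts r0 k (n, f)" using i by (auto simp: lens_pts_def pts_def)
    then obtain t where t: "t < ?m" "?xs ! t = f i" using set_lens_list len by (metis in_set_conv_nth)
    then have "\<beta> t = i" using f\<beta> inj \<beta>n[OF t(1)] i(1) by (auto simp: inj_on_def)
    with t i show False by auto
  qed
  moreover have "f (\<beta> t') - lens_left (w ! t') < f (\<beta> t) - lens_left (w ! t)"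
    if "t < t'" "t' < ?m" for t t'
    using lens_list_offset_less[OF wd, of t t'] that len f\<beta>
      offset_eq[OF xw[THEN conjunct2] xw[THEN conjunct1], of t]
      offset_eq[OF xw[THEN conjunct2] xw[THEN conjunct1], of t'] by simp
  moreover have "f (\<beta> t) \<in> lens r0 k (w ! t)" if "t < ?m" for t
    using xw f\<beta> that by simp
  ultimately have "f \<in> lens_region n ?m \<beta> w" using inj by (simp add: lens_region_def)
  with \<beta> show ?thesis by blast
qed

lemma Wword_event_eq_UN_lens_region:
  assumes w: "set w \<subseteq> {1..k-1}" "length w = m"
  shows "{f. Wword r0 k (n, f) = w \<and> inj_on f {..<n} \<and> W_welldef r0 k (n, f)}
    = (\<Union>\<beta>\<in>index_injections n m. lens_region n m \<beta> w)"
proof (intro equalityI subsetI)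
  fix f assume "f \<in> {f. Wword r0 k (n, f) = w \<and> inj_on f {..<n} \<and> W_welldef r0 k (n, f)}"
  then show "f \<in> (\<Union>\<beta>\<in>index_injections n m. lens_region n m \<beta> w)"
    using lens_region_of_Wword[of n f w] w(2) by auto
next
  fix f assume "f \<in> (\<Union>\<beta>\<in>index_injections n m. lens_region n m \<beta> w)"
  then obtain \<beta> where "\<beta> \<in> index_injections n m" "f \<in> lens_region n m \<beta> w" by blast
  then show "f \<in> {f. Wword r0 k (n, f) = w \<and> inj_on f {..<n} \<and> W_welldef r0 k (n, f)}"
    using Wword_of_lens_region[OF _ _ w] lens_list_of_lens_region[OF _ _ w]
    by (auto simp: lens_region_def)
qed

lemma disjoint_family_lens_region:
  assumes w: "set w \<subseteq> {1..k-1}" "length w = m"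
  shows "disjoint_family_on (\<lambda>\<beta>. lens_region n m \<beta> w) (index_injections n m)"
  unfolding disjoint_family_on_def
proof (intro ballI impI; rule ccontr)
  fix \<beta> \<beta>' assume b: "\<beta> \<in> index_injections n m" "\<beta>' \<in> index_injections n m" "\<beta> \<noteq> \<beta>'"
  assume "lens_region n m \<beta> w \<inter> lens_region n m \<beta>' w \<noteq> {}"
  then obtain f where f: "f \<in> lens_region n m \<beta> w" "f \<in> lens_region n m \<beta>' w" by blast
  have "map (\<lambda>t. f (\<beta> t)) [0..<m] = map (\<lambda>t. f (\<beta>' t)) [0..<m]"
    using lens_list_of_lens_region[OF f(1) b(1) w] lens_list_of_lens_region[OF f(2) b(2) w] by simp
  moreover have "inj_on f {..<n}" using f(1) by (simp add: lens_region_def)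
  moreover have "\<beta> t < n" "\<beta>' t < n" if "t < m" for t
    using b that by (auto simp: index_injections_def)
  ultimately have "\<beta> t = \<beta>' t" if "t < m" for t
    using that by (simp add: map_eq_conv inj_on_def)
  then have "\<beta> = \<beta>'"
    using b by (intro extensionalityI[of _ "{..<m}"]) (auto simp: index_injections_def PiE_def)
  with b show False by simp
qed


lemma lens_measurable [measurable]: "lens r0 k j \<in> sets borel"
  by (simp add: lens_def)

lemma inj_on_event_measurable: "{f. inj_on f {..<n}} \<in> sets unif_seq"
proof -
  let ?S = "{f \<in> space unif_seq. \<forall>i\<in>{..<n}. \<forall>i'\<in>{..<n} - {i}. f i < f i' \<or> f i' < f i}"
  have "?S \<in> sets unif_seq" by measurable
  moreover have "?S = {f. inj_on f {..<n}}"
  proof (intro set_eqI iffI)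
    fix f :: "nat \<Rightarrow> real" assume "f \<in> ?S"
    then have "\<forall>i\<in>{..<n}. \<forall>i'\<in>{..<n} - {i}. f i < f i' \<or> f i' < f i" by simp
    then have "f i < f i' \<or> f i' < f i" if "i < n" "i' < n" "i \<noteq> i'" for i i'
      using that by blast
    then have "f i \<noteq> f i'" if "i < n" "i' < n" "i \<noteq> i'" for i i'
      using that by (metis less_irrefl)
    then show "f \<in> {f. inj_on f {..<n}}" unfolding inj_on_def by blast
  next
    fix f :: "nat \<Rightarrow> real" assume "f \<in> {f. inj_on f {..<n}}"
    then show "f \<in> ?S" by (auto simp: inj_on_def linorder_neq_iff[symmetric])
  qed
  ultimately show ?thesis by simp
qed

lemma lens_region_measurable: "lens_region n m \<beta> w \<in> sets unif_seq"
proof -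
  have "{f \<in> space unif_seq. (\<forall>t\<in>{..<m}. f (\<beta> t) \<in> lens r0 k (w ! t))
      \<and> (\<forall>i\<in>{..<n} - \<beta> ` {..<m}. \<forall>j\<in>{1..k-1}. f i \<notin> lens r0 k j)
      \<and> (\<forall>t\<in>{..<m}. \<forall>t'\<in>{t<..<m}. f (\<beta> t') - lens_left (w ! t') < f (\<beta> t) - lens_left (w ! t))}
    \<in> sets unif_seq"
    by measurable
  moreover have "lens_region n m \<beta> w = {f. inj_on f {..<n}} \<inter> {f \<in> space unif_seq.
        (\<forall>t\<in>{..<m}. f (\<beta> t) \<in> lens r0 k (w ! t))
      \<and> (\<forall>i\<in>{..<n} - \<beta> ` {..<m}. \<forall>j\<in>{1..k-1}. f i \<notin> lens r0 k j)
      \<and> (\<forall>t\<in>{..<m}. \<forall>t'\<in>{t<..<m}. f (\<beta> t') - lens_left (w ! t') < f (\<beta> t) - lens_left (w ! t))}"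
    by (auto simp: lens_region_def)
  ultimately show ?thesis using inj_on_event_measurable by simp
qed

lemma lens_intervals_disjoint:
  assumes "j \<in> {1..k-1}" "j' \<in> {1..k-1}" "lens_left j \<noteq> lens_left j'"
  shows "{lens_left j <..< lens_left j + lens_width} \<inter> {lens_left j' <..< lens_left j' + lens_width} = {}"
  using assms lens_disjoint lens_eq_interval by (metis disjoint_iff)

lemma interval_swap_lens:
  "j \<in> {1..k-1} \<Longrightarrow> x \<in> lens r0 k j \<Longrightarrow>
    interval_swap lens_width (lens_left j) (lens_left j') x = x - lens_left j + lens_left j'"
  using lens_eq_interval by (simp add: interval_swap_def)

lemma distr_interval_swap_lens:
  assumes j: "j \<in> {1..k-1}" and j': "j' \<in> {1..k-1}"
  shows "distr unif01 unif01 (interval_swap lens_width (lens_left j) (lens_left j')) = unif01"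
proof -
  have bounds: "0 \<le> lens_left j \<and> lens_left j + lens_width \<le> 1" if "j \<in> {1..k-1}" for j
  proof -
    have "j \<le> k" using that by auto
    then have "lens_left j + lens_width = real j * r0"
      by (simp add: lens_left_def lens_width_def of_nat_diff algebra_simps)
    then show ?thesis using lens_left_pos[of j] lens_right_less_one[of j] that \<open>j \<le> k\<close> by auto
  qed
  show ?thesis
    by (rule distr_interval_swap) (use bounds[OF j] bounds[OF j'] lens_intervals_disjoint[OF j j'] in auto)
qed

text \<open>Moving point \<open>\<beta> t\<close> from lens \<open>w ! t\<close> to lens \<open>w' ! t\<close> while keeping its offset.\<close>

definition slot_swap :: "nat \<Rightarrow> (nat \<Rightarrow> nat) \<Rightarrow> nat list \<Rightarrow> nat list \<Rightarrow> nat \<Rightarrow> real \<Rightarrow> real" where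
  "slot_swap m \<beta> w w' i = (if i \<in> \<beta> ` {..<m}
     then interval_swap lens_width (lens_left (w ! the_inv_into {..<m} \<beta> i)) (lens_left (w' ! the_inv_into {..<m} \<beta> i))
     else (\<lambda>x. x))"

definition lens_swap :: "nat \<Rightarrow> (nat \<Rightarrow> nat) \<Rightarrow> nat list \<Rightarrow> nat list \<Rightarrow> (nat \<Rightarrow> real) \<Rightarrow> nat \<Rightarrow> real" where
  "lens_swap m \<beta> w w' f = (\<lambda>i. slot_swap m \<beta> w w' i (f i))"

lemma slot_swap_image:
  "inj_on \<beta> {..<m} \<Longrightarrow> t < m \<Longrightarrow>
    slot_swap m \<beta> w w' (\<beta> t) = interval_swap lens_width (lens_left (w ! t)) (lens_left (w' ! t))"
  by (simp add: slot_swap_def the_inv_into_f_f)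

lemma slot_swap_outside: "i \<notin> \<beta> ` {..<m} \<Longrightarrow> slot_swap m \<beta> w w' i = (\<lambda>x. x)"
  by (simp add: slot_swap_def)

lemma slot_swap_measurable: "slot_swap m \<beta> w w' i \<in> borel_measurable borel"
  by (simp add: slot_swap_def interval_swap_measurable)

lemma distr_slot_swap:
  assumes w: "set w \<subseteq> {1..k-1}" "length w = m" and w': "set w' \<subseteq> {1..k-1}" "length w' = m"
    and inj: "inj_on \<beta> {..<m}"
  shows "distr unif01 unif01 (slot_swap m \<beta> w w' i) = unif01"
proof (cases "i \<in> \<beta> ` {..<m}")
  case True
  then have "the_inv_into {..<m} \<beta> i < m" using the_inv_into_into[OF inj True subset_refl] by simp
  then have "w ! the_inv_into {..<m} \<beta> i \<in> {1..k-1}" "w' ! the_inv_into {..<m} \<beta> i \<in> {1..k-1}"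
    using w w' nth_mem by (metis subsetD)+
  then show ?thesis using distr_interval_swap_lens True by (simp add: slot_swap_def)
next
  case False
  then show ?thesis using distr_id[of unif01] by (simp add: slot_swap_def id_def)
qed

lemma lens_swap_inverse:
  assumes \<beta>: "inj_on \<beta> {..<m}"
    and w: "set w \<subseteq> {1..k-1}" "length w = m" and w': "set w' \<subseteq> {1..k-1}" "length w' = m"
  shows "lens_swap m \<beta> w' w (lens_swap m \<beta> w w' f) = f"
proof
  fix i show "lens_swap m \<beta> w' w (lens_swap m \<beta> w w' f) i = f i"
  proof (cases "i \<in> \<beta> ` {..<m}")
    case True
    then obtain t where t: "t < m" "i = \<beta> t" by auto
    then have "w ! t \<in> {1..k-1}" "w' ! t \<in> {1..k-1}" using w w' nth_mem by (metis subsetD)+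
    then show ?thesis
      using interval_swap_involution[OF lens_intervals_disjoint] t
      by (simp add: lens_swap_def slot_swap_image[OF \<beta>])
  next
    case False then show ?thesis by (simp add: lens_swap_def slot_swap_outside)
  qed
qed

lemma lens_regionD:
  assumes "f \<in> lens_region n m \<beta> w"
  shows "inj_on f {..<n}"
    and "\<And>t. t < m \<Longrightarrow> f (\<beta> t) \<in> lens r0 k (w ! t)"
    and "\<And>i j. i < n \<Longrightarrow> i \<notin> \<beta> ` {..<m} \<Longrightarrow> j \<in> {1..k-1} \<Longrightarrow> f i \<notin> lens r0 k j"
    and "\<And>t t'. t < t' \<Longrightarrow> t' < m \<Longrightarrow> f (\<beta> t') - lens_left (w ! t') < f (\<beta> t) - lens_left (w ! t)"
  using assms by (auto simp: lens_region_def)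

context
  fixes n m \<beta> w w' f
  assumes f: "f \<in> lens_region n m \<beta> w" and \<beta>: "\<beta> \<in> index_injections n m"
    and w: "set w \<subseteq> {1..k-1}" "length w = m" and w': "set w' \<subseteq> {1..k-1}" "length w' = m"
begin

lemma letters_in_range: "t < m \<Longrightarrow> w ! t \<in> {1..k-1} \<and> w' ! t \<in> {1..k-1}"
  using w w' nth_mem by (metis subsetD)

lemma lens_swap_moved:
  assumes "t < m"
  shows "lens_swap m \<beta> w w' f (\<beta> t) = f (\<beta> t) - lens_left (w ! t) + lens_left (w' ! t)"
    and "lens_swap m \<beta> w w' f (\<beta> t) \<in> lens r0 k (w' ! t)"
proof -
  have inj\<beta>: "inj_on \<beta> {..<m}" using \<beta> by (simp add: index_injections_def)
  show eq: "lens_swap m \<beta> w w' f (\<beta> t) = f (\<beta> t) - lens_left (w ! t) + lens_left (w' ! t)"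
    using slot_swap_image[OF inj\<beta> assms] interval_swap_lens letters_in_range[OF assms]
      lens_regionD(2)[OF f assms] by (simp add: lens_swap_def)
  show "lens_swap m \<beta> w w' f (\<beta> t) \<in> lens r0 k (w' ! t)"
    using eq lens_regionD(2)[OF f assms] letters_in_range[OF assms] by (simp add: lens_eq_interval)
qed

lemma lens_swap_fixed: "i \<notin> \<beta> ` {..<m} \<Longrightarrow> lens_swap m \<beta> w w' f i = f i"
  by (simp add: lens_swap_def slot_swap_outside)

text \<open>Two moved points stay distinct because their offsets are strictly ordered; a moved point
  lies in a lens while an unmoved one does not.\<close>

lemma inj_on_lens_swap: "inj_on (lens_swap m \<beta> w w' f) {..<n}"
proof (rule inj_onI, rule ccontr)
  let ?g = "lens_swap m \<beta> w w' f"
  fix i i' assume i: "i \<in> {..<n}" "i' \<in> {..<n}" and eq: "?g i = ?g i'" and ne: "i \<noteq> i'"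
  have moved_unmoved: False if "t < m" "i'' < n" "i'' \<notin> \<beta> ` {..<m}" "?g (\<beta> t) = ?g i''" for t i''
    using lens_swap_moved(2)[OF that(1)] lens_swap_fixed[OF that(3)]
      lens_regionD(3)[OF f that(2,3)] letters_in_range[OF that(1)] that(4) by auto
  consider t t' where "t < m" "t' < m" "i = \<beta> t" "i' = \<beta> t'"
    | t where "t < m" "i = \<beta> t" "i' \<notin> \<beta> ` {..<m}"
    | t' where "t' < m" "i' = \<beta> t'" "i \<notin> \<beta> ` {..<m}"
    | "i \<notin> \<beta> ` {..<m}" "i' \<notin> \<beta> ` {..<m}" by blast
  then show False
  proof cases
    case (1 t t')
    then have "t \<noteq> t'" using ne by auto
    have "w' ! t = w' ! t'"
      using lens_swap_moved(2)[OF 1(1)] lens_swap_moved(2)[OF 1(2)] eq 1 letters_in_range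
      by (metis lens_disjoint)
    then have "f (\<beta> t) - lens_left (w ! t) = f (\<beta> t') - lens_left (w ! t')"
      using eq 1 lens_swap_moved(1) by simp
    then show False
      using lens_regionD(4)[OF f, of t t'] lens_regionD(4)[OF f, of t' t] 1 \<open>t \<noteq> t'\<close>
      by (cases t t' rule: linorder_cases) auto
  next
    case 2 then show False using moved_unmoved i eq by blast
  next
    case 3 then show False using moved_unmoved i eq by (metis lessThan_iff)
  next
    case 4 then show False
      using lens_regionD(1)[OF f] i eq ne lens_swap_fixed by (auto simp: inj_on_def)
  qed
qed

lemma lens_swap_in_lens_region: "lens_swap m \<beta> w w' f \<in> lens_region n m \<beta> w'"
  using inj_on_lens_swap lens_swap_moved lens_swap_fixed lens_regionD(3,4)[OF f] letters_in_range
  by (auto simp: lens_region_def)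

end

text \<open>The lens swap is a coordinatewise measure-preserving bijection from one region onto
  the other.\<close>

lemma emeasure_lens_region_eq:
  assumes \<beta>: "\<beta> \<in> index_injections n m"
    and w: "set w \<subseteq> {1..k-1}" "length w = m" and w': "set w' \<subseteq> {1..k-1}" "length w' = m"
  shows "emeasure unif_seq (lens_region n m \<beta> w) = emeasure unif_seq (lens_region n m \<beta> w')"
proof -
  have inj: "inj_on \<beta> {..<m}" using \<beta> by (simp add: index_injections_def)
  have T: "lens_swap m \<beta> w w' \<in> measurable unif_seq unif_seq"
    unfolding lens_swap_def by (rule measurable_coordinatewise) (rule slot_swap_measurable)
  have "lens_swap m \<beta> w w' -` lens_region n m \<beta> w' \<inter> space unif_seq = lens_region n m \<beta> w"
  proof (intro equalityI subsetI)
    fix f assume "f \<in> lens_swap m \<beta> w w' -` lens_region n m \<beta> w' \<inter> space unif_seq"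
    then have "lens_swap m \<beta> w' w (lens_swap m \<beta> w w' f) \<in> lens_region n m \<beta> w"
      using lens_swap_in_lens_region[OF _ \<beta> w' w] by blast
    then show "f \<in> lens_region n m \<beta> w" using lens_swap_inverse[OF inj w w'] by simp
  qed (use lens_swap_in_lens_region[OF _ \<beta> w w'] in auto)
  moreover have "distr unif_seq unif_seq (lens_swap m \<beta> w w') = unif_seq"
    unfolding lens_swap_def
    by (rule distr_coordinatewise) (auto intro: slot_swap_measurable distr_slot_swap[OF w w' inj])
  ultimately show ?thesis
    using emeasure_distr[OF T lens_region_measurable[of n m \<beta> w']] by simp
qed

end

section \<open>The Poisson process\<close>

lemma PPP_eq: "PPP lam = measure_pmf (poisson_pmf lam) \<Otimes>\<^sub>M unif_seq"
  by (simp add: PPP_def unif01_def)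

lemma space_PPP [simp]: "space (PPP lam) = UNIV"
  by (simp add: PPP_eq space_pair_measure)

interpretation PPP: pair_prob_space "measure_pmf (poisson_pmf lam)" unif_seq for lam
  by (simp add: pair_prob_space_def pair_sigma_finite_def prob_space_measure_pmf
      prob_space_imp_sigma_finite unif_seq.P.prob_space_axioms)

lemma prob_space_PPP: "prob_space (PPP lam)"
  unfolding PPP_eq by (rule PPP.P.prob_space_axioms)

lemma PPP_event_measurable:
  assumes "\<And>n. {f. P (n, f)} \<in> sets unif_seq"
  shows "{\<omega> \<in> space (PPP lam). P \<omega>} \<in> sets (PPP lam)"
proof -
  have "{\<omega> \<in> space (PPP lam). P \<omega>} = (\<Union>n. {n} \<times> {f. P (n, f)})" by auto
  also have "\<dots> \<in> sets (PPP lam)" unfolding PPP_eq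
    by (intro sets.countable_UN subsetI) (auto intro!: pair_measureI assms)
  finally show ?thesis .
qed

lemma emeasure_PPP_event:
  assumes "\<And>n. {f. P (n, f)} \<in> sets unif_seq"
  shows "emeasure (PPP lam) {\<omega> \<in> space (PPP lam). P \<omega>}
    = (\<integral>\<^sup>+n. emeasure unif_seq {f. P (n, f)} \<partial>measure_pmf (poisson_pmf lam))"
proof -
  have "{\<omega> \<in> space (PPP lam). P \<omega>} \<in> sets (measure_pmf (poisson_pmf lam) \<Otimes>\<^sub>M unif_seq)"
    using PPP_event_measurable[OF assms, of lam] by (simp add: PPP_eq)
  from unif_seq.P.emeasure_pair_measure_alt[OF this] show ?thesis
    by (simp add: PPP_eq space_pair_measure)
qed

context k_hop_regime
begin

text \<open>Outside this null set the points are distinct and have distinct offsets.\<close>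

definition coincidence_set :: "nat \<Rightarrow> (nat \<Rightarrow> real) set" where
  "coincidence_set n = (\<Union>i\<in>{..<n}. \<Union>i'\<in>{..<n} - {i}. \<Union>c\<in>crit_gaps. {f. f i - f i' = c})"

lemma coincidence_set_null: "coincidence_set n \<in> null_sets unif_seq"
  unfolding coincidence_set_def
  by (intro null_sets_UN' countable_finite finite_lessThan finite_Diff finite_crit_gaps)
    (auto intro: unif_seq_diff_null)

lemma generic_outside_coincidence_set:
  assumes "f \<notin> coincidence_set n"
  shows "inj_on f {..<n} \<and> W_welldef r0 k (n, f)"
proof (intro conjI)
  show inj: "inj_on f {..<n}"
    using assms zero_in_crit_gaps by (force simp: coincidence_set_def inj_on_def)
  show "W_welldef r0 k (n, f)"
    unfolding W_welldef_def
  proof (rule inj_onI, rule ccontr)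
    fix x y assume xy: "x \<in> lens_pts r0 k (n, f)" "y \<in> lens_pts r0 k (n, f)"
      "offset r0 k x = offset r0 k y" "x \<noteq> y"
    obtain i i' where ii: "i < n" "x = f i" "i' < n" "y = f i'"
      using xy(1,2) by (auto simp: lens_pts_def pts_def)
    let ?j = "lensidx r0 k x" and ?j' = "lensidx r0 k y"
    have j: "x \<in> lens r0 k ?j" "?j \<in> {1..k-1}" "y \<in> lens r0 k ?j'" "?j' \<in> {1..k-1}"
      using lens_ptsD xy(1,2) by blast+
    have "f i - f i' = lens_left ?j - lens_left ?j'"
      using offset_eq[OF j(2,1)] offset_eq[OF j(4,3)] xy(3) ii by simp
    moreover have "lens_left ?j - lens_left ?j' \<in> crit_gaps"
      using j by (blast intro: lens_left_diff_in_crit_gaps)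
    moreover have "i \<noteq> i'" using ii xy(4) by auto
    ultimately show False using assms ii unfolding coincidence_set_def by blast
  qed
qed

lemma AE_generic: "AE f in unif_seq. inj_on f {..<n} \<and> W_welldef r0 k (n, f)"
  by (rule AE_I'[OF coincidence_set_null]) (use generic_outside_coincidence_set in blast)

lemma AE_W_welldef: "AE \<omega> in PPP lam. W_welldef r0 k \<omega>"
proof (rule AE_I')
  let ?N = "{\<omega> \<in> space (PPP lam). snd \<omega> \<in> coincidence_set (fst \<omega>)}"
  have N: "\<And>n. {f. (\<lambda>(n, f). f \<in> coincidence_set n) (n, f)} \<in> sets unif_seq"
    using coincidence_set_null by auto
  have "emeasure (PPP lam) ?N = 0"
    using emeasure_PPP_event[OF N] coincidence_set_null by (simp add: null_setsD1 case_prod_beta)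
  then show "?N \<in> null_sets (PPP lam)"
    using PPP_event_measurable[OF N] by (simp add: null_sets_def case_prod_beta)
  show "{\<omega> \<in> space (PPP lam). \<not> W_welldef r0 k \<omega>} \<subseteq> ?N"
    using generic_outside_coincidence_set by force
qed


lemma W_welldef_event_measurable: "{f. W_welldef r0 k (n, f)} \<in> sets unif_seq"
  by (rule measurable_pattern_invariant) (rule pattern_determines(2))

lemma mcount_event_measurable: "{f. \<forall>j\<in>{1..k-1}. mcount r0 k j (n, f) = M j} \<in> sets unif_seq"
proof (rule measurable_pattern_invariant)
  fix f g assume "pattern n f = pattern n g"
  then have "\<And>j. j \<in> {1..k-1} \<Longrightarrow> mcount r0 k j (n, g) = mcount r0 k j (n, f)"
    by (rule pattern_determines(3))
  then show "(\<forall>j\<in>{1..k-1}. mcount r0 k j (n, g) = M j) = (\<forall>j\<in>{1..k-1}. mcount r0 k j (n, f) = M j)"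
    by simp
qed

lemma Wword_event_measurable: "{f. Wword r0 k (n, f) = w} \<in> sets unif_seq"
proof (rule measurable_pattern_invariant)
  fix f g assume "pattern n f = pattern n g"
  then have "Wword r0 k (n, g) = Wword r0 k (n, f)" by (rule pattern_determines(1))
  then show "(Wword r0 k (n, g) = w) = (Wword r0 k (n, f) = w)" by simp
qed

lemma Wword_in_words_iff:
  "Wword r0 k \<omega> \<in> words M (k - 1) \<longleftrightarrow> (\<forall>j\<in>{1..k-1}. mcount r0 k j \<omega> = M j)"
proof -
  have "set (Wword r0 k \<omega>) \<subseteq> {1..k-1}"
    using lens_ptsD[of _ \<omega>] by (auto simp: Wword_eq_map_lens_list set_lens_list)
  then show ?thesis by (simp add: words_def count_list_Wword)
qed

lemma emeasure_Wword_event_eq_sum: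
  assumes w: "set w \<subseteq> {1..k-1}" "length w = m"
  shows "emeasure unif_seq {f. Wword r0 k (n, f) = w}
    = (\<Sum>\<beta>\<in>index_injections n m. emeasure unif_seq (lens_region n m \<beta> w))"
proof -
  let ?G = "{f. Wword r0 k (n, f) = w \<and> inj_on f {..<n} \<and> W_welldef r0 k (n, f)}"
  have "?G = {f. Wword r0 k (n, f) = w} \<inter> {f. inj_on f {..<n}} \<inter> {f. W_welldef r0 k (n, f)}"
    by auto
  then have "?G \<in> sets unif_seq"
    using Wword_event_measurable inj_on_event_measurable W_welldef_event_measurable by simp
  then have "emeasure unif_seq {f. Wword r0 k (n, f) = w} = emeasure unif_seq ?G"
    using AE_generic[of n] Wword_event_measurable by (intro emeasure_eq_AE) auto
  also have "\<dots> = (\<Sum>\<beta>\<in>index_injections n m. emeasure unif_seq (lens_region n m \<beta> w))"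
    unfolding Wword_event_eq_UN_lens_region[OF w]
    by (rule sum_emeasure[symmetric])
      (auto intro: lens_region_measurable disjoint_family_lens_region[OF w] finite_index_injections)
  finally show ?thesis .
qed

lemma emeasure_PPP_Wword_eq:
  assumes w: "w \<in> words M (k - 1)" and w': "w' \<in> words M (k - 1)"
  shows "emeasure (PPP lam) {\<omega> \<in> space (PPP lam). Wword r0 k \<omega> = w}
    = emeasure (PPP lam) {\<omega> \<in> space (PPP lam). Wword r0 k \<omega> = w'}"
proof -
  let ?m = "\<Sum>j\<in>{1..k-1}. M j"
  have ws: "set w \<subseteq> {1..k-1}" "length w = ?m" "set w' \<subseteq> {1..k-1}" "length w' = ?m"
    using w w' length_words by (auto simp: words_def)
  have "emeasure unif_seq {f. Wword r0 k (n, f) = w} = emeasure unif_seq {f. Wword r0 k (n, f) = w'}" for n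
    unfolding emeasure_Wword_event_eq_sum[OF ws(1,2)] emeasure_Wword_event_eq_sum[OF ws(3,4)]
    using emeasure_lens_region_eq[OF _ ws] by (rule sum.cong[OF refl])
  moreover have "emeasure (PPP lam) {\<omega> \<in> space (PPP lam). Wword r0 k \<omega> = v}
      = (\<integral>\<^sup>+n. emeasure unif_seq {f. Wword r0 k (n, f) = v} \<partial>measure_pmf (poisson_pmf lam))" for v
    by (rule emeasure_PPP_event) (rule Wword_event_measurable)
  ultimately show ?thesis by presburger
qed

lemma mcount_event_PPP_measurable:
  "{\<omega> \<in> space (PPP lam). \<forall>j\<in>{1..k-1}. mcount r0 k j \<omega> = M j} \<in> sets (PPP lam)"
  by (rule PPP_event_measurable) (rule mcount_event_measurable)

lemma Wword_event_PPP_measurable: "{\<omega> \<in> space (PPP lam). Wword r0 k \<omega> = w} \<in> sets (PPP lam)"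
  by (rule PPP_event_measurable) (rule Wword_event_measurable)

lemma cond_prob_W_welldef:
  assumes pos: "\<P>(\<omega> in PPP lam. \<forall>j\<in>{1..k-1}. mcount r0 k j \<omega> = M j) > 0"
  shows "\<P>(\<omega> in PPP lam. W_welldef r0 k \<omega> \<bar> \<forall>j\<in>{1..k-1}. mcount r0 k j \<omega> = M j) = 1"
proof -
  interpret prob_space "PPP lam" by (rule prob_space_PPP)
  let ?C = "{\<omega> \<in> space (PPP lam). \<forall>j\<in>{1..k-1}. mcount r0 k j \<omega> = M j}"
  let ?WC = "{\<omega> \<in> space (PPP lam). W_welldef r0 k \<omega> \<and> (\<forall>j\<in>{1..k-1}. mcount r0 k j \<omega> = M j)}"
  have "?WC = {\<omega> \<in> space (PPP lam). W_welldef r0 k \<omega>} \<inter> ?C" by auto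
  moreover have "{\<omega> \<in> space (PPP lam). W_welldef r0 k \<omega>} \<in> sets (PPP lam)"
    by (rule PPP_event_measurable) (rule W_welldef_event_measurable)
  ultimately have "?WC \<in> sets (PPP lam)" using mcount_event_PPP_measurable by simp
  then have "prob ?WC = prob ?C"
    using AE_W_welldef[of lam] mcount_event_PPP_measurable
    by (intro measure_eq_AE) (auto elim!: AE_mp)
  then show ?thesis using pos by (simp add: cond_prob_def)
qed

lemma cond_prob_Wword:
  assumes pos: "\<P>(\<omega> in PPP lam. \<forall>j\<in>{1..k-1}. mcount r0 k j \<omega> = M j) > 0"
    and w: "w \<in> words M (k - 1)"
  shows "\<P>(\<omega> in PPP lam. Wword r0 k \<omega> = w \<bar> \<forall>j\<in>{1..k-1}. mcount r0 k j \<omega> = M j)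
    = 1 / real (card (words M (k - 1)))"
proof -
  interpret prob_space "PPP lam" by (rule prob_space_PPP)
  let ?C = "{\<omega> \<in> space (PPP lam). \<forall>j\<in>{1..k-1}. mcount r0 k j \<omega> = M j}"
  let ?S = "\<lambda>w. {\<omega> \<in> space (PPP lam). Wword r0 k \<omega> = w}"
  have "prob ?C = prob (\<Union>v\<in>words M (k - 1). ?S v)"
    using Wword_in_words_iff by (intro arg_cong[where f=prob]) auto
  also have "\<dots> = (\<Sum>v\<in>words M (k - 1). prob (?S v))"
    by (rule measure_finite_Union)
      (use Wword_event_PPP_measurable[of lam] in \<open>auto simp: finite_words disjoint_family_on_def emeasure_eq_measure\<close>)
  also have "\<dots> = real (card (words M (k - 1))) * prob (?S w)"
    using emeasure_PPP_Wword_eq[OF _ w] by (simp add: measure_def)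
  finally have C: "prob ?C = real (card (words M (k - 1))) * prob (?S w)" .
  moreover have "\<P>(\<omega> in PPP lam. Wword r0 k \<omega> = w \<and> (\<forall>j\<in>{1..k-1}. mcount r0 k j \<omega> = M j)) = prob (?S w)"
    using w Wword_in_words_iff by (intro arg_cong[where f=prob]) auto
  moreover have "prob (?S w) \<noteq> 0" using C pos by (metis mult_zero_right less_irrefl)
  ultimately show ?thesis using pos by (simp add: cond_prob_def)
qed

end

theorem mainTheorem5:
  fixes lam r0 :: real and k :: nat
  assumes "lam > 0" and "k \<ge> 3"
    and "1 / real k < r0" and "r0 < 1 / real (k - 1)"
  shows "(\<forall>\<omega>\<in>space (PPP lam). \<forall>vs\<in>khop_paths r0 k \<omega>.
             \<forall>j\<in>{1..k-1}. vs ! j \<in> lens r0 k j)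
    \<and> (\<forall>M :: nat \<Rightarrow> nat.
         \<P>(\<omega> in PPP lam. \<forall>j\<in>{1..k-1}. mcount r0 k j \<omega> = M j) > 0 \<longrightarrow>
           \<P>(\<omega> in PPP lam. W_welldef r0 k \<omega> \<bar> \<forall>j\<in>{1..k-1}. mcount r0 k j \<omega> = M j) = 1
         \<and> (\<forall>w\<in>words M (k - 1).
             \<P>(\<omega> in PPP lam. Wword r0 k \<omega> = w \<bar> \<forall>j\<in>{1..k-1}. mcount r0 k j \<omega> = M j)
               = 1 / real (card (words M (k - 1)))))
    \<and> (AE \<omega> in PPP lam.
         sigma r0 k \<omega> = card (emb_tuples (Wword r0 k \<omega>) (k - 1))
       \<and> sigma r0 k \<omega> =
           (\<Sum>s = 1..mcount r0 k (k - 1) \<omega>.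
              S_t (k - 2) (pi_ij (k - 2) (k - 1) (Wword r0 k \<omega>) s)
                  (filter (\<lambda>a. a \<noteq> k - 1) (Wword r0 k \<omega>))))"
proof -
  \<comment> \<open>The argument works for any intensity.\<close>
  interpret k_hop_regime r0 k by unfold_locales (use assms in auto)
  have "AE \<omega> in PPP lam. sigma r0 k \<omega> = card (emb_tuples (Wword r0 k \<omega>) (k - 1))
       \<and> sigma r0 k \<omega> = (\<Sum>s = 1..mcount r0 k (k - 1) \<omega>.
              S_t (k - 2) (pi_ij (k - 2) (k - 1) (Wword r0 k \<omega>) s)
                  (filter (\<lambda>a. a \<noteq> k - 1) (Wword r0 k \<omega>)))"
    using AE_W_welldef by eventually_elim (intro conjI sigma_eq_card_emb_tuples sigma_eq_sum_S_t)
  with khop_path_in_lens cond_prob_W_welldef cond_prob_Wword show ?thesis by blast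
qed

end
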